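(* Let $f=f^\alpha$ be a developable strip along an arc-length parametrized $C^\infty$ embedded curve $\mathbf c:I\to\mathbb R^3$ with curvature $\kappa>0$, let $C=\mathbf c(I)$, and let $\epsilon>0$ be sufficiently small. Suppose $C$ has no symmetries, i.e. there is no isometry $T\neq\mathrm{id}$ of $\mathbb R^3$ with $T(C)=C$. Then for every $\delta\in(0,\epsilon]$, the set $\phi_f(\Omega_\delta)$ is not congruent to any subset of $\psi_f(\Omega_\epsilon)$; that is, there is no isometry $T$ of $\mathbb R^3$ with $T(\phi_f(\Omega_\delta))\subset\psi_f(\Omega_\epsilon)$. Here $\Omega_\delta=I\times(-\delta,\delta)$.
   Context: Space curves. For a $C^\infty$ curve $\mathbf c:I\to\mathbb R^3$, $I=[a,b]$, parametrized by arc length with curvature $\kappa=|\mathbf c''|>0$, set $\mathbf e=\mathbf c'$, $\mathbf n=\mathbf c''/\kappa$, $\mathbf b=\mathbf e\times\mathbf n$, and torsion $\tau:=\mathbf n'\cdot\mathbf b$. Developable strips. Given $C^\infty$ functions $\alpha,\beta$ on $I$ with $0<|\alpha(t)|<\pi/2$ and $0<\beta(t)<\pi$, the ruled surface is $f(t,v)=\mathbf c(t)+v\,\xi(t)$, $(t,v)\in I\times(-\epsilon,\epsilon)$, with $\xi=\cos\beta\,\mathbf e+\sin\beta(\cos\alpha\,\mathbf n+\sin\alpha\,\mathbf b)$; $\alpha$ is the first angular function. $f$ is developable iff $\cot\beta=(\alpha'+\tau)/(\kappa\sin\alpha)$; the developable strip with first angular function $\alpha$ is denoted $f^\alpha$.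 The dual of $f=f^\alpha$ is $\check f:=f^{-\alpha}$. Origami maps. $\phi_f(t,v)=f(t,v)$ for $v\ge0$ and $\phi_f(t,v)=\check f(t,v)$ for $v<0$; $\psi_f(t,v)=\check f(t,v)$ for $v\ge0$ and $\psi_f(t,v)=f(t,v)$ for $v<0$. *)

theory Defs
  imports "HOL-Analysis.Analysis"
begin

definition vd :: "real set \<Rightarrow> (real \<Rightarrow> 'a::real_normed_vector) \<Rightarrow> real \<Rightarrow> 'a" where
  "vd I f t = vector_derivative f (at t within I)"

definition smooth_on :: "real set \<Rightarrow> (real \<Rightarrow> 'a::real_normed_vector) \<Rightarrow> bool" where
  "smooth_on I f \<longleftrightarrow> (\<exists>D. D 0 = f \<and>
      (\<forall>k. \<forall>t\<in>I. (D k has_vector_derivative D (Suc k) t) (at t within I)))"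

definition tang :: "real set \<Rightarrow> (real \<Rightarrow> real^3) \<Rightarrow> real \<Rightarrow> real^3" where
  "tang I c t = vd I c t"

definition curv :: "real set \<Rightarrow> (real \<Rightarrow> real^3) \<Rightarrow> real \<Rightarrow> real" where
  "curv I c t = norm (vd I (tang I c) t)"

definition normal :: "real set \<Rightarrow> (real \<Rightarrow> real^3) \<Rightarrow> real \<Rightarrow> real^3" where
  "normal I c t = (1 / curv I c t) *\<^sub>R vd I (tang I c) t"

definition binormal :: "real set \<Rightarrow> (real \<Rightarrow> real^3) \<Rightarrow> real \<Rightarrow> real^3" where
  "binormal I c t = cross3 (tang I c t) (normal I c t)"

definition tors :: "real set \<Rightarrow> (real \<Rightarrow> real^3) \<Rightarrow> real \<Rightarrow> real" where
  "tors I c t = vd I (normal I c) t \<bullet> binormal I c t"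

text \<open>Second angular function beta of the developable strip f^alpha: the unique
  beta in (0,pi) with cot beta = (alpha' + tau) / (kappa sin alpha).
  (pi/2 - arctan x is the unique angle in (0,pi) with cotangent x.)\<close>
definition beta :: "real set \<Rightarrow> (real \<Rightarrow> real^3) \<Rightarrow> (real \<Rightarrow> real) \<Rightarrow> real \<Rightarrow> real" where
  "beta I c \<alpha> t = pi / 2 - arctan ((vd I \<alpha> t + tors I c t) / (curv I c t * sin (\<alpha> t)))"

definition ruling :: "real set \<Rightarrow> (real \<Rightarrow> real^3) \<Rightarrow> (real \<Rightarrow> real) \<Rightarrow> real \<Rightarrow> real^3" where
  "ruling I c \<alpha> t = cos (beta I c \<alpha> t) *\<^sub>R tang I c t
     + sin (beta I c \<alpha> t) *\<^sub>R (cos (\<alpha> t) *\<^sub>R normal I c t + sin (\<alpha> t) *\<^sub>R binormal I c t)"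

definition strip :: "real set \<Rightarrow> (real \<Rightarrow> real^3) \<Rightarrow> (real \<Rightarrow> real) \<Rightarrow> real \<times> real \<Rightarrow> real^3" where
  "strip I c \<alpha> p = c (fst p) + snd p *\<^sub>R ruling I c \<alpha> (fst p)"

definition origami_phi :: "real set \<Rightarrow> (real \<Rightarrow> real^3) \<Rightarrow> (real \<Rightarrow> real) \<Rightarrow> real \<times> real \<Rightarrow> real^3" where
  "origami_phi I c \<alpha> p =
     (if snd p \<ge> 0 then strip I c \<alpha> p else strip I c (\<lambda>t. - \<alpha> t) p)"

definition origami_psi :: "real set \<Rightarrow> (real \<Rightarrow> real^3) \<Rightarrow> (real \<Rightarrow> real) \<Rightarrow> real \<times> real \<Rightarrow> real^3" where
  "origami_psi I c \<alpha> p =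
     (if snd p \<ge> 0 then strip I c (\<lambda>t. - \<alpha> t) p else strip I c \<alpha> p)"

definition Omega :: "real set \<Rightarrow> real \<Rightarrow> (real \<times> real) set" where
  "Omega I \<delta> = I \<times> {-\<delta><..<\<delta>}"

definition isometry3 :: "(real^3 \<Rightarrow> real^3) \<Rightarrow> bool" where
  "isometry3 T \<longleftrightarrow> (\<forall>x y. dist (T x) (T y) = dist x y)"

end

theory Submission
  imports Defs
begin

text \<open>Suppose an isometry $T$ maps $\varphi_f(\Omega_\delta)$ into $\psi_f(\Omega_\epsilon)$.
  For small $\epsilon$ the two strips along $C$ meet only along $C$ and are immersed, so away
  from $C$ the set $\psi_f(\Omega_\epsilon)$ is locally a single smooth sheet.  If $T$ moved a
  point of $C$ off $C$, the image would have to contain curves leaving that point in the three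
  independent directions $L\mathbf e$, $L\xi$ and $-L\check\xi$, $L$ the linear part of $T$,
  which cannot all be tangent to one sheet.  Hence $T(C) \subseteq C$, so $T(C) = C$ by
  compactness and $T = \mathrm{id}$ since $C$ has no symmetries.  But $\varphi_f$ and $\psi_f$
  differ near the endpoint $\mathbf c(a)$: the points $\mathbf c(a) + v\,\xi(a)$, $v > 0$, lie
  on $\varphi_f(\Omega_\delta)$ and stay at distance of order $v$ both from the sheet of
  $\check f$ and from the half-sheet $v < 0$ of $f$.\<close>

section \<open>Functions of class $C^k$ on an interval\<close>

fun Ck_on :: "real set \<Rightarrow> nat \<Rightarrow> (real \<Rightarrow> 'a::real_normed_vector) \<Rightarrow> bool" where
  "Ck_on I 0 f \<longleftrightarrow> continuous_on I f"
| "Ck_on I (Suc k) f \<longleftrightarrow>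
     (\<exists>f'. (\<forall>t\<in>I. (f has_vector_derivative f' t) (at t within I)) \<and> Ck_on I k f')"

lemma Ck_on_cong: "Ck_on I k f \<Longrightarrow> (\<And>t. t \<in> I \<Longrightarrow> f t = g t) \<Longrightarrow> Ck_on I k g"
proof (induction k arbitrary: f g)
  case 0
  then show ?case by (metis Ck_on.simps(1) continuous_on_cong)
next
  case (Suc k)
  then obtain f' where f': "\<forall>t\<in>I. (f has_vector_derivative f' t) (at t within I)" "Ck_on I k f'"
    by auto
  have "\<forall>t\<in>I. (g has_vector_derivative f' t) (at t within I)"
    using f'(1) Suc.prems(2) unfolding has_vector_derivative_def
    by (metis has_derivative_transform)
  with f'(2) show ?case by auto
qed

lemma Ck_on_SucD: "Ck_on I (Suc k) f \<Longrightarrow> Ck_on I k f"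
proof (induction k arbitrary: f)
  case 0
  then obtain f' where "\<forall>t\<in>I. (f has_vector_derivative f' t) (at t within I)" by auto
  then show ?case
    using has_vector_derivative_continuous continuous_on_eq_continuous_within by fastforce
next
  case (Suc k)
  then show ?case by auto
qed

lemma Ck_on_const: "Ck_on I k (\<lambda>t. c)"
proof (induction k arbitrary: c)
  case 0
  then show ?case by simp
next
  case (Suc k)
  then show ?case by (auto intro!: exI[of _ "\<lambda>t. 0"] derivative_eq_intros)
qed

lemma Ck_on_add: "Ck_on I k f \<Longrightarrow> Ck_on I k g \<Longrightarrow> Ck_on I k (\<lambda>t. f t + g t)"
proof (induction k arbitrary: f g)
  case 0
  then show ?case by (auto intro: continuous_on_add)
next
  case (Suc k)
  then obtain f' g' where "\<forall>t\<in>I. (f has_vector_derivative f' t) (at t within I)" "Ck_on I k f'"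
     "\<forall>t\<in>I. (g has_vector_derivative g' t) (at t within I)" "Ck_on I k g'" by auto
  with Suc.IH show ?case
    by (auto intro!: exI[of _ "\<lambda>t. f' t + g' t"] derivative_eq_intros)
qed

lemma Ck_on_uminus: "Ck_on I k f \<Longrightarrow> Ck_on I k (\<lambda>t. - f t)"
proof (induction k arbitrary: f)
  case 0
  then show ?case by (auto intro: continuous_on_minus)
next
  case (Suc k)
  then obtain f' where "\<forall>t\<in>I. (f has_vector_derivative f' t) (at t within I)" "Ck_on I k f'"
    by auto
  with Suc.IH show ?case by (auto intro!: exI[of _ "\<lambda>t. - f' t"] derivative_eq_intros)
qed

lemma Ck_on_bilinear:
  assumes "bounded_bilinear pr"
  shows "Ck_on I k f \<Longrightarrow> Ck_on I k g \<Longrightarrow> Ck_on I k (\<lambda>t. pr (f t) (g t))"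
proof (induction k arbitrary: f g)
  case 0
  then show ?case using bounded_bilinear.continuous_on[OF assms] by auto
next
  case (Suc k)
  then obtain f' g' where d: "\<forall>t\<in>I. (f has_vector_derivative f' t) (at t within I)" "Ck_on I k f'"
     "\<forall>t\<in>I. (g has_vector_derivative g' t) (at t within I)" "Ck_on I k g'" by auto
  have "Ck_on I k f" "Ck_on I k g" using Suc.prems Ck_on_SucD by blast+
  with Suc.IH d have "Ck_on I k (\<lambda>t. pr (f t) (g' t) + pr (f' t) (g t))"
    by (intro Ck_on_add) auto
  moreover have "\<forall>t\<in>I. ((\<lambda>t. pr (f t) (g t)) has_vector_derivative
      pr (f t) (g' t) + pr (f' t) (g t)) (at t within I)"
    using d bounded_bilinear.has_vector_derivative[OF assms] by blast
  ultimately show ?case by auto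
qed

lemma bounded_bilinear_cross3: "bounded_bilinear cross3"
  using bilinear_conv_bounded_bilinear bilinear_cross by blast

lemmas Ck_on_scaleR = Ck_on_bilinear[OF bounded_bilinear_scaleR]
lemmas Ck_on_mult = Ck_on_bilinear[OF bounded_bilinear_mult]
lemmas Ck_on_inner = Ck_on_bilinear[OF bounded_bilinear_inner]
lemmas Ck_on_cross3 = Ck_on_bilinear[OF bounded_bilinear_cross3]

lemma Ck_on_Suc_realE:
  assumes "Ck_on I (Suc k) (h :: real \<Rightarrow> real)"
  obtains h' where "\<forall>t\<in>I. (h has_real_derivative h' t) (at t within I)" "Ck_on I k h'"
  using assms by (auto simp: has_real_derivative_iff_has_vector_derivative)

lemma Ck_on_Suc_realI:
  "\<forall>t\<in>I. ((h :: real \<Rightarrow> real) has_real_derivative h' t) (at t within I) \<Longrightarrow> Ck_on I k h' \<Longrightarrow>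
    Ck_on I (Suc k) h"
  by (auto simp: has_real_derivative_iff_has_vector_derivative)

lemma Ck_on_inverse:
  "Ck_on I k (h :: real \<Rightarrow> real) \<Longrightarrow> (\<And>t. t \<in> I \<Longrightarrow> h t \<noteq> 0) \<Longrightarrow> Ck_on I k (\<lambda>t. inverse (h t))"
proof (induction k arbitrary: h)
  case 0
  then show ?case by (auto intro!: continuous_on_inverse)
next
  case (Suc k)
  from Suc.prems(1) obtain h' where d: "\<forall>t\<in>I. (h has_real_derivative h' t) (at t within I)"
    "Ck_on I k h'"
    by (rule Ck_on_Suc_realE)
  have "Ck_on I k (\<lambda>t. inverse (h t))" using Suc Ck_on_SucD by blast
  with d have "Ck_on I k (\<lambda>t. - (h' t * (inverse (h t) * inverse (h t))))"
    by (intro Ck_on_uminus Ck_on_mult) auto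
  moreover have "\<forall>t\<in>I. ((\<lambda>t. inverse (h t)) has_real_derivative
      - (h' t * (inverse (h t) * inverse (h t)))) (at t within I)"
    using d Suc.prems(2) by (auto intro!: derivative_eq_intros simp: field_simps power2_eq_square)
  ultimately show ?case by (intro Ck_on_Suc_realI)
qed

lemma Ck_on_sin_cos:
  "Ck_on I k (h :: real \<Rightarrow> real) \<Longrightarrow> Ck_on I k (\<lambda>t. sin (h t)) \<and> Ck_on I k (\<lambda>t. cos (h t))"
proof (induction k arbitrary: h)
  case 0
  then show ?case by (auto intro!: continuous_intros)
next
  case (Suc k)
  from Suc.prems(1) obtain h' where d: "\<forall>t\<in>I. (h has_real_derivative h' t) (at t within I)"
    "Ck_on I k h'"
    by (rule Ck_on_Suc_realE)
  have "Ck_on I k (\<lambda>t. sin (h t))" "Ck_on I k (\<lambda>t. cos (h t))" using Suc Ck_on_SucD by blast+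
  with d have "Ck_on I k (\<lambda>t. cos (h t) * h' t)" "Ck_on I k (\<lambda>t. - (sin (h t) * h' t))"
    by (auto intro!: Ck_on_uminus Ck_on_mult)
  moreover have "\<forall>t\<in>I. ((\<lambda>t. sin (h t)) has_real_derivative cos (h t) * h' t) (at t within I)"
    "\<forall>t\<in>I. ((\<lambda>t. cos (h t)) has_real_derivative - (sin (h t) * h' t)) (at t within I)"
    using d by (auto intro!: derivative_eq_intros)
  ultimately show ?case by (intro conjI Ck_on_Suc_realI)
qed

lemma Ck_on_arctan: "Ck_on I k (h :: real \<Rightarrow> real) \<Longrightarrow> Ck_on I k (\<lambda>t. arctan (h t))"
proof (cases k)
  case 0
  then show "Ck_on I k h \<Longrightarrow> ?thesis" by (auto intro!: continuous_intros)
next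
  case (Suc m)
  assume "Ck_on I k h"
  then obtain h' where d: "\<forall>t\<in>I. (h has_real_derivative h' t) (at t within I)" "Ck_on I m h'"
    using Suc Ck_on_Suc_realE by metis
  have "Ck_on I m h" using \<open>Ck_on I k h\<close> Suc Ck_on_SucD by blast
  with d have "Ck_on I m (\<lambda>t. h' t * inverse (1 + h t * h t))"
    by (intro Ck_on_mult Ck_on_inverse Ck_on_add Ck_on_const) (auto, smt (verit) zero_le_square)
  moreover have "\<forall>t\<in>I. ((\<lambda>t. arctan (h t)) has_real_derivative h' t * inverse (1 + h t * h t))
      (at t within I)"
    using d by (auto intro!: derivative_eq_intros simp: field_simps power2_eq_square)
  ultimately show ?thesis unfolding Suc by (intro Ck_on_Suc_realI)
qed

lemma Ck_on_sqrt:
  "Ck_on I k (h :: real \<Rightarrow> real) \<Longrightarrow> (\<And>t. t \<in> I \<Longrightarrow> h t > 0) \<Longrightarrow> Ck_on I k (\<lambda>t. sqrt (h t))"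
proof (induction k arbitrary: h)
  case 0
  then show ?case by (auto intro!: continuous_intros)
next
  case (Suc k)
  from Suc.prems(1) obtain h' where d: "\<forall>t\<in>I. (h has_real_derivative h' t) (at t within I)"
    "Ck_on I k h'"
    by (rule Ck_on_Suc_realE)
  have "Ck_on I k (\<lambda>t. sqrt (h t))" using Suc Ck_on_SucD by blast
  moreover have "t \<in> I \<Longrightarrow> 2 * sqrt (h t) \<noteq> 0" for t
    using Suc.prems(2)
    by (metis less_irrefl mult_eq_0_iff real_sqrt_eq_zero_cancel_iff zero_neq_numeral)
  ultimately have "Ck_on I k (\<lambda>t. h' t * inverse (2 * sqrt (h t)))"
    using d by (intro Ck_on_mult Ck_on_inverse Ck_on_const) auto
  moreover have "\<forall>t\<in>I. ((\<lambda>t. sqrt (h t)) has_real_derivative h' t * inverse (2 * sqrt (h t)))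
      (at t within I)"
    using d Suc.prems(2) by (auto intro!: derivative_eq_intros simp: field_simps)
      (metis less_irrefl, metis not_less_iff_gr_or_eq)
  ultimately show ?case by (intro Ck_on_Suc_realI)
qed

lemma Ck_on_norm:
  fixes f :: "real \<Rightarrow> 'a::real_inner"
  assumes "Ck_on I k f" "\<And>t. t \<in> I \<Longrightarrow> f t \<noteq> 0"
  shows "Ck_on I k (\<lambda>t. norm (f t))"
proof -
  have "Ck_on I k (\<lambda>t. sqrt (f t \<bullet> f t))"
    using assms by (intro Ck_on_sqrt Ck_on_inner) auto
  then show ?thesis by (rule Ck_on_cong) (simp add: norm_eq_sqrt_inner)
qed

lemma Ck_on_vd:
  fixes f :: "real \<Rightarrow> 'a::euclidean_space"
  assumes "a < b" "Ck_on {a..b} (Suc k) f"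
  shows "Ck_on {a..b} k (vd {a..b} f)"
    and "t \<in> {a..b} \<Longrightarrow> (f has_vector_derivative vd {a..b} f t) (at t within {a..b})"
proof -
  obtain f' where f': "\<forall>t\<in>{a..b}. (f has_vector_derivative f' t) (at t within {a..b})"
    "Ck_on {a..b} k f'"
    using assms by auto
  then have vd: "t \<in> {a..b} \<Longrightarrow> vd {a..b} f t = f' t" for t
    by (metis assms(1) vd_def vector_derivative_within_closed_interval)
  from f' show "Ck_on {a..b} k (vd {a..b} f)"
    by (elim Ck_on_cong) (simp add: vd)
  from f' show "t \<in> {a..b} \<Longrightarrow> (f has_vector_derivative vd {a..b} f t) (at t within {a..b})"
    by (simp add: vd)
qed

definition Cinf_on :: "real set \<Rightarrow> (real \<Rightarrow> 'a::real_normed_vector) \<Rightarrow> bool" where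
  "Cinf_on I f \<longleftrightarrow> (\<forall>k. Ck_on I k f)"

lemma smooth_on_imp_Cinf_on:
  assumes "smooth_on I f"
  shows "Cinf_on I f"
proof -
  obtain D where D: "D 0 = f" "\<forall>k. \<forall>t\<in>I. (D k has_vector_derivative D (Suc k) t) (at t within I)"
    using assms unfolding smooth_on_def by blast
  have "\<forall>j. Ck_on I k (D j)" for k
  proof (induction k)
    case 0
    then show ?case using D(2) has_vector_derivative_continuous continuous_on_eq_continuous_within
      by (metis Ck_on.simps(1))
  next
    case (Suc k)
    then show ?case using D(2) by auto
  qed
  then show ?thesis unfolding Cinf_on_def D(1)[symmetric] by blast
qed

lemma Cinf_on_cong: "Cinf_on I f \<Longrightarrow> (\<And>t. t \<in> I \<Longrightarrow> f t = g t) \<Longrightarrow> Cinf_on I g"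
  unfolding Cinf_on_def by (blast intro: Ck_on_cong)

lemma Cinf_on_continuous_on: "Cinf_on I f \<Longrightarrow> continuous_on I f"
  unfolding Cinf_on_def by (metis Ck_on.simps(1))

lemma Cinf_on_vd:
  fixes f :: "real \<Rightarrow> 'a::euclidean_space"
  assumes "a < b" "Cinf_on {a..b} f"
  shows "Cinf_on {a..b} (vd {a..b} f)"
    and "t \<in> {a..b} \<Longrightarrow> (f has_vector_derivative vd {a..b} f t) (at t within {a..b})"
proof -
  have Suc: "Ck_on {a..b} (Suc k) f" for k
    using assms(2) unfolding Cinf_on_def by blast
  show "Cinf_on {a..b} (vd {a..b} f)"
    unfolding Cinf_on_def using Ck_on_vd(1)[OF assms(1) Suc] by blast
  show "t \<in> {a..b} \<Longrightarrow> (f has_vector_derivative vd {a..b} f t) (at t within {a..b})"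
    by (rule Ck_on_vd(2)[OF assms(1) Suc])
qed

lemma Cinf_on_const: "Cinf_on I (\<lambda>t. c)"
  unfolding Cinf_on_def by (simp add: Ck_on_const)

lemma Cinf_on_add: "Cinf_on I f \<Longrightarrow> Cinf_on I g \<Longrightarrow> Cinf_on I (\<lambda>t. f t + g t)"
  unfolding Cinf_on_def by (simp add: Ck_on_add)

lemma Cinf_on_uminus: "Cinf_on I f \<Longrightarrow> Cinf_on I (\<lambda>t. - f t)"
  unfolding Cinf_on_def by (simp add: Ck_on_uminus)

lemma Cinf_on_diff: "Cinf_on I f \<Longrightarrow> Cinf_on I g \<Longrightarrow> Cinf_on I (\<lambda>t. f t - g t)"
  using Cinf_on_add[of I f "\<lambda>t. - g t"] Cinf_on_uminus[of I g] by simp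

lemma Cinf_on_scaleR: "Cinf_on I h \<Longrightarrow> Cinf_on I f \<Longrightarrow> Cinf_on I (\<lambda>t. h t *\<^sub>R f t)"
  unfolding Cinf_on_def by (simp add: Ck_on_scaleR)

lemma Cinf_on_mult: "Cinf_on I h \<Longrightarrow> Cinf_on I g \<Longrightarrow> Cinf_on I (\<lambda>t. h t * (g t :: real))"
  unfolding Cinf_on_def by (simp add: Ck_on_mult)

lemma Cinf_on_inner: "Cinf_on I f \<Longrightarrow> Cinf_on I g \<Longrightarrow> Cinf_on I (\<lambda>t. f t \<bullet> (g t :: 'a::real_inner))"
  unfolding Cinf_on_def by (simp add: Ck_on_inner)

lemma Cinf_on_cross3: "Cinf_on I f \<Longrightarrow> Cinf_on I g \<Longrightarrow> Cinf_on I (\<lambda>t. cross3 (f t) (g t))"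
  unfolding Cinf_on_def by (simp add: Ck_on_cross3)

lemma Cinf_on_inverse: "Cinf_on I h \<Longrightarrow> (\<And>t. t \<in> I \<Longrightarrow> h t \<noteq> 0) \<Longrightarrow> Cinf_on I (\<lambda>t. inverse (h t :: real))"
  unfolding Cinf_on_def by (simp add: Ck_on_inverse)

lemma Cinf_on_divide:
  assumes "Cinf_on I h" "Cinf_on I g" "\<And>t. t \<in> I \<Longrightarrow> g t \<noteq> 0"
  shows "Cinf_on I (\<lambda>t. h t / g t :: real)"
proof -
  have "Cinf_on I (\<lambda>t. h t * inverse (g t))"
    using assms by (intro Cinf_on_mult Cinf_on_inverse)
  then show ?thesis by (rule Cinf_on_cong) (simp only: divide_inverse)
qed

lemma Cinf_on_sin: "Cinf_on I h \<Longrightarrow> Cinf_on I (\<lambda>t. sin (h t :: real))"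
  unfolding Cinf_on_def by (simp add: Ck_on_sin_cos)

lemma Cinf_on_cos: "Cinf_on I h \<Longrightarrow> Cinf_on I (\<lambda>t. cos (h t :: real))"
  unfolding Cinf_on_def by (simp add: Ck_on_sin_cos)

lemma Cinf_on_arctan: "Cinf_on I h \<Longrightarrow> Cinf_on I (\<lambda>t. arctan (h t))"
  unfolding Cinf_on_def by (simp add: Ck_on_arctan)

lemma Cinf_on_norm:
  "Cinf_on I f \<Longrightarrow> (\<And>t. t \<in> I \<Longrightarrow> f t \<noteq> 0) \<Longrightarrow> Cinf_on I (\<lambda>t. norm (f t :: 'a::real_inner))"
  unfolding Cinf_on_def by (simp add: Ck_on_norm)

section \<open>Vector algebra in $\mathbb{R}^3$\<close>

lemma norm_cross3_le: "norm (cross3 x y) \<le> norm x * norm y" for x y :: "real^3"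
proof -
  have "(norm (cross3 x y))\<^sup>2 \<le> (norm x * norm y)\<^sup>2"
    using norm_cross_dot[of x y] by (metis le_add_same_cancel1 zero_le_power2)
  then show ?thesis by (simp add: power2_le_iff_abs_le)
qed

lemma coeff_norm_cross3_le:
  fixes x y :: "real^3"
  shows "\<bar>h\<bar> * norm (cross3 x y) \<le> norm (h *\<^sub>R x + k *\<^sub>R y) * norm y"
    and "\<bar>k\<bar> * norm (cross3 x y) \<le> norm x * norm (h *\<^sub>R x + k *\<^sub>R y)"
proof -
  have "cross3 (h *\<^sub>R x + k *\<^sub>R y) y = h *\<^sub>R cross3 x y"
    by (simp add: cross_add_left cross_mult_left)
  then show "\<bar>h\<bar> * norm (cross3 x y) \<le> norm (h *\<^sub>R x + k *\<^sub>R y) * norm y"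
    using norm_cross3_le[of "h *\<^sub>R x + k *\<^sub>R y" y] by simp
  have "cross3 x (h *\<^sub>R x + k *\<^sub>R y) = k *\<^sub>R cross3 x y"
    by (simp add: cross_add_right cross_mult_right)
  then show "\<bar>k\<bar> * norm (cross3 x y) \<le> norm x * norm (h *\<^sub>R x + k *\<^sub>R y)"
    using norm_cross3_le[of x "h *\<^sub>R x + k *\<^sub>R y"] by simp
qed

lemma cross3_nonzero_lower_bound:
  fixes a1 a2 :: "real^3"
  assumes "cross3 a1 a2 \<noteq> 0"
  obtains m where "m > 0" "\<And>z. m * norm z \<le> norm (fst z *\<^sub>R a1 + snd z *\<^sub>R a2)"
proof
  let ?S = "norm a1 + norm a2 + 1"
  have S: "?S > 0" by (simp add: add_nonneg_pos)
  show "norm (cross3 a1 a2) / ?S > 0" using assms S by simp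
  fix z :: "real \<times> real"
  let ?V = "fst z *\<^sub>R a1 + snd z *\<^sub>R a2"
  have "norm (cross3 a1 a2) * norm z \<le> norm (cross3 a1 a2) * (\<bar>fst z\<bar> + \<bar>snd z\<bar>)"
    using norm_Pair_le[of "fst z" "snd z"] by (simp add: mult_left_mono)
  also have "\<dots> \<le> norm ?V * (norm a1 + norm a2)"
    using coeff_norm_cross3_le[where h="fst z" and k="snd z" and x=a1 and y=a2]
    by (simp add: algebra_simps)
  also have "\<dots> \<le> norm ?V * ?S" by (simp add: mult_left_mono)
  finally show "norm (cross3 a1 a2) / ?S * norm z \<le> norm ?V"
    using S by (simp add: field_simps)
qed

lemma small_pair_combination_eq_0:
  fixes e X :: "real^3"
  assumes "norm e = 1" "norm X = 1" "m > 0" "m \<le> norm (cross3 e X)"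
    and small: "norm (h *\<^sub>R e + k *\<^sub>R X) \<le> m / 6 * \<bar>h\<bar>"
  shows "h = 0 \<and> k = 0"
proof -
  let ?V = "h *\<^sub>R e + k *\<^sub>R X"
  have "\<bar>h\<bar> * m \<le> \<bar>h\<bar> * norm (cross3 e X)" "\<bar>k\<bar> * m \<le> \<bar>k\<bar> * norm (cross3 e X)"
    using assms(4) by (simp_all add: mult_left_mono)
  moreover have "\<bar>h\<bar> * norm (cross3 e X) \<le> norm ?V" "\<bar>k\<bar> * norm (cross3 e X) \<le> norm ?V"
    using coeff_norm_cross3_le[where h=h and k=k and x=e and y=X] assms(1,2) by simp_all
  ultimately have "m * (\<bar>k\<bar> + 2 / 3 * \<bar>h\<bar>) \<le> 0"
    using small by (simp add: algebra_simps)
  then have "\<bar>k\<bar> + 2 / 3 * \<bar>h\<bar> \<le> 0"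
    using \<open>m > 0\<close> by (simp add: mult_le_0_iff)
  then have "\<bar>k\<bar> = 0" "\<bar>h\<bar> = 0" using abs_ge_zero[of h] abs_ge_zero[of k] by linarith+
  then show ?thesis by simp
qed

lemma small_triple_combination_eq_0:
  fixes e X Y :: "real^3"
  assumes unit: "norm e = 1" "norm X = 1" "norm Y = 1"
    and "m > 0" "m \<le> \<bar>e \<bullet> cross3 X Y\<bar>"
    and small: "norm (h *\<^sub>R e + k *\<^sub>R X + l *\<^sub>R Y) \<le> m / 6 * \<bar>h\<bar>"
  shows "h = 0 \<and> k = 0 \<and> l = 0"
proof -
  let ?V = "h *\<^sub>R e + k *\<^sub>R X + l *\<^sub>R Y"
  let ?D = "\<bar>e \<bullet> cross3 X Y\<bar>"
  have bound: "\<bar>?V \<bullet> cross3 u w\<bar> \<le> norm ?V" if "norm u = 1" "norm w = 1" for u w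
  proof -
    have "\<bar>?V \<bullet> cross3 u w\<bar> \<le> norm ?V * norm (cross3 u w)" by (rule Cauchy_Schwarz_ineq2)
    also have "\<dots> \<le> norm ?V" using norm_cross3_le[of u w] that by (simp add: mult_left_le)
    finally show ?thesis .
  qed
  have triple: "X \<bullet> cross3 e Y = - (e \<bullet> cross3 X Y)" "Y \<bullet> cross3 e X = e \<bullet> cross3 X Y"
    by (metis cross_skew cross_triple inner_commute inner_minus_left)
      (metis cross_triple inner_commute)
  have "?V \<bullet> cross3 X Y = h * (e \<bullet> cross3 X Y)"
    "?V \<bullet> cross3 e Y = k * (X \<bullet> cross3 e Y)"
    "?V \<bullet> cross3 e X = l * (Y \<bullet> cross3 e X)"
    by (simp_all add: inner_add_left dot_cross_self)
  then have "\<bar>h\<bar> * ?D \<le> norm ?V" "\<bar>k\<bar> * ?D \<le> norm ?V" "\<bar>l\<bar> * ?D \<le> norm ?V"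
    using bound[of X Y] bound[of e Y] bound[of e X] unit triple by (simp_all add: abs_mult)
  moreover have "\<bar>h\<bar> * m \<le> \<bar>h\<bar> * ?D" "\<bar>k\<bar> * m \<le> \<bar>k\<bar> * ?D" "\<bar>l\<bar> * m \<le> \<bar>l\<bar> * ?D"
    using \<open>m \<le> ?D\<close> by (simp_all add: mult_left_mono)
  ultimately have "m * (\<bar>k\<bar> + \<bar>l\<bar> + \<bar>h\<bar> / 2) \<le> 0"
    using small by (simp add: algebra_simps)
  then have "\<bar>k\<bar> + \<bar>l\<bar> + \<bar>h\<bar> / 2 \<le> 0"
    using \<open>m > 0\<close> by (simp add: mult_le_0_iff)
  then have "\<bar>h\<bar> = 0" "\<bar>k\<bar> = 0" "\<bar>l\<bar> = 0"
    using abs_ge_zero[of h] abs_ge_zero[of k] abs_ge_zero[of l] by linarith+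
  then show ?thesis by simp
qed

lemma triple_nonzero_orthogonal_eq_0:
  fixes e X Y z :: "real^3"
  assumes "e \<bullet> cross3 X Y \<noteq> 0" "z \<bullet> e = 0" "z \<bullet> X = 0" "z \<bullet> Y = 0"
  shows "z = 0"
proof -
  have "(e \<bullet> cross3 X Y) *\<^sub>R z =
      (z \<bullet> e) *\<^sub>R cross3 X Y + (z \<bullet> X) *\<^sub>R cross3 Y e + (z \<bullet> Y) *\<^sub>R cross3 e X"
    by (simp add: vec_eq_iff forall_3 cross_components inner_vec_def sum_3 algebra_simps)
  with assms show ?thesis by simp
qed

definition frame_vector :: "real^3 \<Rightarrow> real^3 \<Rightarrow> real \<Rightarrow> real \<Rightarrow> real^3" where
  "frame_vector e n \<alpha> \<beta> =
     cos \<beta> *\<^sub>R e + sin \<beta> *\<^sub>R (cos \<alpha> *\<^sub>R n + sin \<alpha> *\<^sub>R cross3 e n)"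

lemma orthonormal_cross3_identities:
  fixes e n :: "real^3"
  assumes "norm e = 1" "norm n = 1" "e \<bullet> n = 0"
  shows "e \<bullet> e = 1" "n \<bullet> n = 1" "cross3 e n \<bullet> cross3 e n = 1"
    "e \<bullet> cross3 e n = 0" "n \<bullet> cross3 e n = 0" "cross3 e (cross3 e n) = - n"
    "n \<bullet> e = 0" "cross3 e n \<bullet> e = 0" "cross3 e n \<bullet> n = 0"
proof -
  show ee: "e \<bullet> e = 1" "n \<bullet> n = 1"
    using power2_norm_eq_inner[of e] power2_norm_eq_inner[of n] assms by simp_all
  have "(norm (cross3 e n))\<^sup>2 = 1" using norm_cross_dot[of e n] assms by simp
  then show "cross3 e n \<bullet> cross3 e n = 1" by (simp add: power2_norm_eq_inner)
  show "e \<bullet> cross3 e n = 0" "n \<bullet> cross3 e n = 0" "cross3 e n \<bullet> e = 0" "cross3 e n \<bullet> n = 0"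
    using dot_cross_self by (auto simp: inner_commute)
  show "cross3 e (cross3 e n) = - n" using Lagrange[of e e n] assms ee by simp
  show "n \<bullet> e = 0" using assms by (simp add: inner_commute)
qed

lemma frame_vector_props:
  fixes e n :: "real^3"
  assumes "norm e = 1" "norm n = 1" "e \<bullet> n = 0"
  shows "norm (frame_vector e n \<alpha> \<beta>) = 1"
    and "norm (cross3 e (frame_vector e n \<alpha> \<beta>)) = \<bar>sin \<beta>\<bar>"
proof -
  note f = orthonormal_cross3_identities[OF assms]
  define ca sa cb sb where "ca = cos \<alpha>" "sa = sin \<alpha>" "cb = cos \<beta>" "sb = sin \<beta>"
  have trig: "ca\<^sup>2 + sa\<^sup>2 = 1" "cb\<^sup>2 + sb\<^sup>2 = 1" by (simp_all add: ca_sa_cb_sb_def)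
  have X: "frame_vector e n \<alpha> \<beta> = cb *\<^sub>R e + sb *\<^sub>R (ca *\<^sub>R n + sa *\<^sub>R cross3 e n)"
    by (simp add: frame_vector_def ca_sa_cb_sb_def)
  have "(norm (frame_vector e n \<alpha> \<beta>))\<^sup>2 = cb\<^sup>2 + sb\<^sup>2 * (ca\<^sup>2 + sa\<^sup>2)"
    unfolding power2_norm_eq_inner X
    by (simp add: inner_add_left inner_add_right f assms(3) inner_commute power2_eq_square
        algebra_simps)
  then show "norm (frame_vector e n \<alpha> \<beta>) = 1"
    using trig norm_ge_zero[of "frame_vector e n \<alpha> \<beta>"] by (simp add: power2_eq_1_iff)
  have cross: "cross3 e (frame_vector e n \<alpha> \<beta>) = sb *\<^sub>R (ca *\<^sub>R cross3 e n - sa *\<^sub>R n)"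
    unfolding X by (simp add: cross_add_right cross_mult_right f assms(3) algebra_simps)
  have "(norm (cross3 e (frame_vector e n \<alpha> \<beta>)))\<^sup>2 = sb\<^sup>2 * (ca\<^sup>2 + sa\<^sup>2)"
    unfolding power2_norm_eq_inner cross
    by (simp add: inner_add_left inner_add_right inner_diff_left inner_diff_right f inner_commute
        power2_eq_square algebra_simps)
  then have "(norm (cross3 e (frame_vector e n \<alpha> \<beta>)))\<^sup>2 = sb\<^sup>2" using trig by simp
  then show "norm (cross3 e (frame_vector e n \<alpha> \<beta>)) = \<bar>sin \<beta>\<bar>"
    using real_sqrt_abs[of "norm (cross3 e (frame_vector e n \<alpha> \<beta>))"] real_sqrt_abs[of sb]
    by (simp add: ca_sa_cb_sb_def)
qed

lemma frame_vector_triple: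
  fixes e n :: "real^3"
  assumes "norm e = 1" "norm n = 1" "e \<bullet> n = 0"
  shows "e \<bullet> cross3 (frame_vector e n \<alpha> \<beta>) (frame_vector e n (- \<alpha>) \<beta>') =
    - 2 * sin \<beta> * sin \<beta>' * sin \<alpha> * cos \<alpha>"
proof -
  note f = orthonormal_cross3_identities[OF assms]
  define ca sa cb sb cb' sb'
    where "ca = cos \<alpha>" "sa = sin \<alpha>" "cb = cos \<beta>" "sb = sin \<beta>" "cb' = cos \<beta>'" "sb' = sin \<beta>'"
  have X: "frame_vector e n \<alpha> \<beta> = cb *\<^sub>R e + sb *\<^sub>R (ca *\<^sub>R n + sa *\<^sub>R cross3 e n)"
    and Y: "frame_vector e n (- \<alpha>) \<beta>' = cb' *\<^sub>R e + sb' *\<^sub>R (ca *\<^sub>R n - sa *\<^sub>R cross3 e n)"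
    by (simp_all add: frame_vector_def ca_sa_cb_sb_cb'_sb'_def)
  have cross: "cross3 e (frame_vector e n (- \<alpha>) \<beta>') = sb' *\<^sub>R (ca *\<^sub>R cross3 e n + sa *\<^sub>R n)"
    unfolding Y
    by (simp add: cross_add_right cross_mult_right Cross3.right_diff_distrib f assms(3)
        algebra_simps)
  have "e \<bullet> cross3 (frame_vector e n \<alpha> \<beta>) (frame_vector e n (- \<alpha>) \<beta>') =
      - (cross3 e (frame_vector e n (- \<alpha>) \<beta>') \<bullet> frame_vector e n \<alpha> \<beta>)"
    by (metis cross_skew cross_triple inner_commute inner_minus_left)
  also have "\<dots> = - 2 * sb * sb' * sa * ca"
    unfolding cross X
    by (simp add: inner_add_left inner_add_right f assms(3) inner_commute algebra_simps)
  finally have "e \<bullet> cross3 (frame_vector e n \<alpha> \<beta>) (frame_vector e n (- \<alpha>) \<beta>') =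
      - 2 * sb * sb' * sa * ca" .
  then show ?thesis by (simp add: ca_sa_cb_sb_cb'_sb'_def)
qed

lemma plane_distance_lower_bound:
  fixes u E Y :: "real^3"
  assumes "u \<bullet> cross3 E Y \<noteq> 0"
  obtains \<eta> where "\<eta> > 0" "\<And>v h k. 0 \<le> v \<Longrightarrow> \<eta> * v \<le> norm (v *\<^sub>R u - (h *\<^sub>R E + k *\<^sub>R Y))"
proof
  let ?N = "cross3 E Y"
  have N: "?N \<noteq> 0" using assms by auto
  then show "\<bar>u \<bullet> ?N\<bar> / norm ?N > 0" using assms by simp
  fix v h k :: real assume "0 \<le> v"
  have "(v *\<^sub>R u - (h *\<^sub>R E + k *\<^sub>R Y)) \<bullet> ?N = v * (u \<bullet> ?N)"
    by (simp add: inner_diff_left inner_add_left dot_cross_self)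
  then have "v * \<bar>u \<bullet> ?N\<bar> \<le> norm (v *\<^sub>R u - (h *\<^sub>R E + k *\<^sub>R Y)) * norm ?N"
    using Cauchy_Schwarz_ineq2[of "v *\<^sub>R u - (h *\<^sub>R E + k *\<^sub>R Y)" ?N] \<open>0 \<le> v\<close>
    by (simp add: abs_mult)
  with N show "\<bar>u \<bullet> ?N\<bar> / norm ?N * v \<le> norm (v *\<^sub>R u - (h *\<^sub>R E + k *\<^sub>R Y))"
    by (simp add: field_simps)
qed

text \<open>Dotting with $w = (E \cdot E)\, u - (u \cdot E)\, E$, which is orthogonal to $E$ and has
  $w \cdot u = \|E \times u\|^2 > 0$, shows that $v u$ stays away from the half-plane
  spanned by $E$ and $-u$.\<close>

lemma half_plane_distance_lower_bound:
  fixes u E :: "real^3"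
  assumes "cross3 E u \<noteq> 0"
  obtains \<eta> where "\<eta> > 0"
    "\<And>v h k. 0 \<le> v \<Longrightarrow> k \<le> 0 \<Longrightarrow> \<eta> * v \<le> norm (v *\<^sub>R u - (h *\<^sub>R E + k *\<^sub>R u))"
proof
  define w where "w = (E \<bullet> E) *\<^sub>R u - (u \<bullet> E) *\<^sub>R E"
  have wE: "w \<bullet> E = 0" "E \<bullet> w = 0"
    by (simp_all add: w_def inner_diff_left inner_diff_right inner_commute[of u E])
  have "w \<bullet> u = (norm (cross3 E u))\<^sup>2"
    using norm_cross_dot[of E u]
    by (simp add: w_def inner_diff_left power2_eq_square power2_norm_eq_inner[symmetric]
        inner_commute algebra_simps)
  then have wu: "w \<bullet> u > 0" using assms by simp
  then have w: "w \<noteq> 0" by auto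
  then show "(w \<bullet> u) / norm w > 0" using wu by simp
  fix v h k :: real assume "0 \<le> v" "k \<le> 0"
  let ?R = "v *\<^sub>R u - (h *\<^sub>R E + k *\<^sub>R u)"
  have "v * (w \<bullet> u) \<le> (v - k) * (w \<bullet> u)" using \<open>k \<le> 0\<close> wu by (simp add: mult_right_mono)
  also have "\<dots> = ?R \<bullet> w"
    by (simp add: inner_diff_left inner_add_left inner_commute wE algebra_simps)
  also have "\<dots> \<le> norm ?R * norm w" by (metis Cauchy_Schwarz_ineq2 abs_le_iff)
  finally show "(w \<bullet> u) / norm w * v \<le> norm ?R" using w by (simp add: field_simps)
qed

lemma vector_derivative_deviation_bound:
  fixes f :: "real \<Rightarrow> 'a::real_normed_vector"
  assumes "convex S" and deriv: "\<And>r. r \<in> S \<Longrightarrow> (f has_vector_derivative f' r) (at r within S)"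
    and bound: "\<And>r. r \<in> S \<Longrightarrow> norm (f' r - v) \<le> B" and "x \<in> S" "y \<in> S"
  shows "norm (f x - f y - (x - y) *\<^sub>R v) \<le> B * \<bar>x - y\<bar>"
proof -
  have "norm ((\<lambda>r. f r - r *\<^sub>R v) x - (\<lambda>r. f r - r *\<^sub>R v) y) \<le> B * norm (x - y)"
  proof (rule differentiable_bound[OF \<open>convex S\<close> _ _ \<open>x \<in> S\<close> \<open>y \<in> S\<close>])
    fix r assume r: "r \<in> S"
    show "((\<lambda>r. f r - r *\<^sub>R v) has_derivative (\<lambda>h. h *\<^sub>R (f' r - v))) (at r within S)"
      using deriv[OF r] unfolding has_vector_derivative_def
      by (auto intro!: derivative_eq_intros simp: algebra_simps)
    show "onorm (\<lambda>h. h *\<^sub>R (f' r - v)) \<le> B"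
      using onorm_scaleR_left[OF bounded_linear_ident, of "f' r - v"] bound[OF r]
      by (simp add: onorm_id)
  qed
  then show ?thesis by (simp add: algebra_simps)
qed

text \<open>An isometric self-map of a compact set is onto: otherwise a point $y$ outside
  the (compact) image has positive distance $d$ from it, and the orbit of $y$ would be
  $d$-separated, which is impossible in a compact set.\<close>

lemma isometric_compact_self_map_onto:
  fixes T :: "'a::metric_space \<Rightarrow> 'a"
  assumes C: "compact C" and T: "\<And>x y. x \<in> C \<Longrightarrow> y \<in> C \<Longrightarrow> dist (T x) (T y) = dist x y"
    and sub: "T ` C \<subseteq> C"
  shows "T ` C = C"
proof (rule ccontr)
  assume "T ` C \<noteq> C"
  then obtain y where y: "y \<in> C" "y \<notin> T ` C" using sub by blast
  have "continuous_on C T"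
    unfolding continuous_on_iff
  proof (intro ballI allI impI)
    fix x and \<epsilon> :: real assume "x \<in> C" "\<epsilon> > 0"
    then show "\<exists>\<delta>>0. \<forall>x'\<in>C. dist x' x < \<delta> \<longrightarrow> dist (T x') (T x) < \<epsilon>"
      using T by (intro exI[of _ \<epsilon>]) auto
  qed
  then have TC: "compact (T ` C)" using C by (rule compact_continuous_image)
  define d where "d = infdist y (T ` C)"
  have d: "d > 0"
    unfolding d_def using infdist_pos_not_in_closed[OF compact_imp_closed[OF TC] _ y(2)] y(1)
    by blast
  define x where "x n = (T ^^ n) y" for n
  have xC: "x n \<in> C" for n
    by (induction n) (use y(1) sub in \<open>auto simp: x_def\<close>)
  have shift: "dist (x (k + j)) (x j) = dist (x k) y" for k j
  proof (induction j)
    case 0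
    then show ?case by (simp add: x_def)
  next
    case (Suc j)
    have "dist (x (k + Suc j)) (x (Suc j)) = dist (T (x (k + j))) (T (x j))" by (simp add: x_def)
    also have "\<dots> = dist (x (k + j)) (x j)" using T xC by simp
    finally show ?case using Suc by simp
  qed
  have separated: "d \<le> dist (x i) (x j)" if "j < i" for i j
  proof -
    obtain k where k: "i = Suc k + j" using \<open>j < i\<close> by (metis add_Suc less_iff_Suc_add add.commute)
    have "x (Suc k) \<in> T ` C" using xC[of k] by (simp add: x_def)
    then have "d \<le> dist y (x (Suc k))" unfolding d_def by (rule infdist_le)
    also have "\<dots> = dist (x i) (x j)" using shift[of "Suc k" j] k by (simp add: dist_commute)
    finally show ?thesis .
  qed
  obtain l r where r: "strict_mono (r :: nat \<Rightarrow> nat)" "(x \<circ> r) \<longlonglongrightarrow> l"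
    using seq_compactE[OF compact_imp_seq_compact[OF C]] xC by blast
  then have "Cauchy (x \<circ> r)" by (intro LIMSEQ_imp_Cauchy)
  then obtain M where "\<forall>m\<ge>M. \<forall>n\<ge>M. dist ((x \<circ> r) m) ((x \<circ> r) n) < d"
    using d unfolding Cauchy_def by blast
  then have "dist (x (r (Suc M))) (x (r M)) < d" by simp
  moreover have "r M < r (Suc M)" using r(1) by (simp add: strict_monoD)
  ultimately show False using separated[of "r M" "r (Suc M)"] by simp
qed

lemma isometry3_affine:
  assumes "isometry3 T"
  obtains b L where "orthogonal_transformation L" "\<And>x. T x = b + L x"
proof
  show "orthogonal_transformation (\<lambda>x. T x - T 0)"
    using assms unfolding orthogonal_transformation_isometry isometry3_def by (simp add: dist_norm)
qed simp

lemma orthogonal_transformation_affine_has_vector_derivative: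
  fixes L :: "'a::euclidean_space \<Rightarrow> 'a"
  assumes "orthogonal_transformation L" "(y has_vector_derivative w) F"
  shows "((\<lambda>v. b + L (y v)) has_vector_derivative L w) F"
  using has_vector_derivative_add[OF has_vector_derivative_const[of b]
      bounded_linear.has_vector_derivative[OF linear_conv_bounded_linear[THEN iffD1,
        OF orthogonal_transformation_linear[OF assms(1)]] assms(2)]]
  by simp

lemma compact_injective_separated:
  fixes c :: "'a::metric_space \<Rightarrow> 'b::metric_space"
  assumes "compact K" "continuous_on K c" "inj_on c K" "\<eta> > 0"
  obtains \<mu> where "\<mu> > 0" "\<And>s s'. s \<in> K \<Longrightarrow> s' \<in> K \<Longrightarrow> \<eta> \<le> dist s s' \<Longrightarrow> \<mu> \<le> dist (c s) (c s')"
proof -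
  let ?S = "(K \<times> K) \<inter> {p. \<eta> \<le> dist (fst p) (snd p)}"
  have "closed {p :: 'a \<times> 'a. \<eta> \<le> dist (fst p) (snd p)}"
    by (intro closed_Collect_le continuous_intros)
  then have S: "compact ?S" using assms(1) by (intro compact_Int_closed compact_Times)
  show ?thesis
  proof (cases "?S = {}")
    case True
    then show ?thesis by (intro that[of 1]) auto
  next
    case False
    have "continuous_on ?S (\<lambda>p. dist (c (fst p)) (c (snd p)))"
      by (intro continuous_intros continuous_on_compose2[OF assms(2)]) auto
    from continuous_attains_inf[OF S False this]
    obtain p where p: "p \<in> ?S"
      "\<And>q. q \<in> ?S \<Longrightarrow> dist (c (fst p)) (c (snd p)) \<le> dist (c (fst q)) (c (snd q))"
      by blast
    then have "fst p \<noteq> snd p" using assms(4) by auto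
    then have "c (fst p) \<noteq> c (snd p)" using p(1) inj_onD[OF assms(3)] by auto
    then show ?thesis using p by (intro that[of "dist (c (fst p)) (c (snd p))"]) force+
  qed
qed

lemma injective_derivative_remainder:
  fixes A :: "real \<times> real \<Rightarrow> real^3"
  assumes dA: "(A has_derivative (\<lambda>z. fst z *\<^sub>R a1 + snd z *\<^sub>R a2)) (at p0 within H)"
    and N: "cross3 a1 a2 \<noteq> 0" and "\<eta> > 0"
  obtains d where "d > 0" "\<And>p. p \<in> H \<Longrightarrow> norm (p - p0) < d \<Longrightarrow>
      norm (A p - A p0 - (fst (p - p0) *\<^sub>R a1 + snd (p - p0) *\<^sub>R a2)) \<le> \<eta> * norm (A p - A p0)"
proof -
  let ?D = "\<lambda>z :: real \<times> real. fst z *\<^sub>R a1 + snd z *\<^sub>R a2"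
  obtain m where m: "m > 0" "\<And>z. m * norm z \<le> norm (?D z)"
    using cross3_nonzero_lower_bound[OF N] by blast
  let ?\<eta> = "min 1 \<eta>"
  have "?\<eta> * (m / 2) > 0" using m(1) \<open>\<eta> > 0\<close> by simp
  then obtain d where d: "d > 0"
    "\<forall>p\<in>H. norm (p - p0) < d \<longrightarrow> norm (A p - A p0 - ?D (p - p0)) \<le> ?\<eta> * (m / 2) * norm (p - p0)"
    using dA unfolding has_derivative_within_alt by blast
  show ?thesis
  proof (rule that[OF d(1)])
    fix p assume "p \<in> H" "norm (p - p0) < d"
    let ?R = "A p - A p0 - ?D (p - p0)"
    let ?k = "m / 2 * norm (p - p0)"
    have R: "norm ?R \<le> ?\<eta> * ?k" using d(2) \<open>p \<in> H\<close> \<open>norm (p - p0) < d\<close> by (simp add: mult.assoc)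
    have k: "?k \<ge> 0" using m(1) by simp
    have "m * norm (p - p0) \<le> norm (?D (p - p0))" by (rule m(2))
    also have "\<dots> \<le> norm (A p - A p0) + norm ?R"
      using norm_triangle_ineq4[of "A p - A p0" ?R] by simp
    also have "norm ?R \<le> ?k"
      using R mult_left_le_one_le[OF k, of ?\<eta>] \<open>\<eta> > 0\<close> by simp
    finally have "?k \<le> norm (A p - A p0)" by simp
    then have "\<eta> * ?k \<le> \<eta> * norm (A p - A p0)" using \<open>\<eta> > 0\<close> by (simp add: mult_left_mono)
    moreover have "?\<eta> * ?k \<le> \<eta> * ?k" using k by (simp add: mult_right_mono)
    ultimately show "norm ?R \<le> \<eta> * norm (A p - A p0)" using R by linarith
  qed
qed

text \<open>The hypothesis on $G$ says that $A$ is an injective immersion near $p_0$ onto the part of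
  $Y$ near $A(p_0)$; curves in $Y$ leaving $A(p_0)$ are then tangent to the plane spanned by
  $a_1$ and $a_2$.\<close>

lemma one_sided_tangent_estimate:
  fixes A :: "real \<times> real \<Rightarrow> real^3" and G :: "real^3 \<Rightarrow> real \<times> real" and y :: "real \<Rightarrow> real^3"
  assumes dA: "(A has_derivative (\<lambda>z. fst z *\<^sub>R a1 + snd z *\<^sub>R a2)) (at p0 within H)"
    and N: "cross3 a1 a2 \<noteq> 0"
    and G: "\<And>d. d > 0 \<Longrightarrow>
      \<exists>\<rho>>0. \<forall>x\<in>Y. norm (x - A p0) < \<rho> \<longrightarrow> G x \<in> H \<and> A (G x) = x \<and> norm (G x - p0) < d"
    and y: "(y has_vector_derivative w) (at 0 within {0..r})" "r > 0" "y 0 = A p0" "y ` {0..r} \<subseteq> Y"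
    and \<eta>: "0 < \<eta>" "\<eta> \<le> 1"
  shows "\<bar>w \<bullet> cross3 a1 a2\<bar> \<le> \<eta> * ((norm w + 2) * norm (cross3 a1 a2))"
proof -
  let ?N = "cross3 a1 a2"
  let ?D = "\<lambda>z :: real \<times> real. fst z *\<^sub>R a1 + snd z *\<^sub>R a2"
  obtain d1 where d1: "d1 > 0" "\<And>p. p \<in> H \<Longrightarrow> norm (p - p0) < d1 \<Longrightarrow>
      norm (A p - A p0 - ?D (p - p0)) \<le> \<eta> * norm (A p - A p0)"
    using injective_derivative_remainder[OF dA N \<eta>(1)] by blast
  obtain \<rho> where \<rho>: "\<rho> > 0"
    "\<forall>x\<in>Y. norm (x - A p0) < \<rho> \<longrightarrow> G x \<in> H \<and> A (G x) = x \<and> norm (G x - p0) < d1"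
    using G[OF d1(1)] by blast
  obtain d2 where d2: "d2 > 0"
    "\<forall>v\<in>{0..r}. norm (v - 0) < d2 \<longrightarrow> norm (y v - y 0 - (v - 0) *\<^sub>R w) \<le> \<eta> * norm (v - 0)"
    using y(1) \<eta>(1) unfolding has_vector_derivative_def has_derivative_within_alt by blast
  define W where "W = norm w + 1"
  have W: "W > 0" by (simp add: W_def add_nonneg_pos)
  define v where "v = min (min r (d2 / 2)) (\<rho> / (2 * W))"
  have "v * W \<le> \<rho> / (2 * W) * W" using W by (intro mult_right_mono) (auto simp: v_def)
  also have "\<dots> < \<rho>" using W \<rho>(1) by simp
  finally have v: "v > 0" "v \<in> {0..r}" "v < d2" "v * W < \<rho>"
    using y(2) d2(1) \<rho>(1) W by (auto simp: v_def)
  let ?S = "y v - y 0 - v *\<^sub>R w"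
  have S: "norm ?S \<le> \<eta> * v" using d2(2) v by auto
  also have "\<dots> \<le> v" using \<eta>(2) v(1) by (simp add: mult_left_le_one_le)
  finally have "norm (v *\<^sub>R w) + norm ?S \<le> v * W"
    using v(1) by (simp add: W_def algebra_simps)
  moreover have "norm (y v - A p0) \<le> norm (v *\<^sub>R w) + norm ?S"
    using norm_triangle_ineq[of "v *\<^sub>R w" ?S] y(3) by simp
  ultimately have yv: "norm (y v - A p0) \<le> v * W" by linarith
  have "y v \<in> Y" using y(4) v(2) by blast
  moreover have "norm (y v - A p0) < \<rho>" using yv v(4) by linarith
  ultimately obtain p where p: "p \<in> H" "A p = y v" "norm (p - p0) < d1"
    using \<rho>(2) by blast
  let ?R = "A p - A p0 - ?D (p - p0)"
  have "norm ?R \<le> \<eta> * norm (y v - A p0)" using d1(2)[OF p(1,3)] p(2) by simp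
  also have "\<dots> \<le> \<eta> * (v * W)" using yv \<eta>(1) by (simp add: mult_left_mono)
  finally have R: "norm ?R \<le> \<eta> * (v * W)" .
  have "?D (p - p0) \<bullet> ?N = 0" by (simp add: inner_add_left dot_cross_self)
  then have "v * (w \<bullet> ?N) = ?R \<bullet> ?N - ?S \<bullet> ?N"
    using p(2) y(3) by (simp add: inner_diff_left algebra_simps)
  then have "v * \<bar>w \<bullet> ?N\<bar> = \<bar>?R \<bullet> ?N - ?S \<bullet> ?N\<bar>"
    using v(1) by (metis abs_mult abs_of_pos)
  also have "\<dots> \<le> \<bar>?R \<bullet> ?N\<bar> + \<bar>?S \<bullet> ?N\<bar>" by (rule abs_triangle_ineq4)
  also have "\<dots> \<le> norm ?R * norm ?N + norm ?S * norm ?N"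
    by (intro add_mono Cauchy_Schwarz_ineq2)
  also have "\<dots> \<le> \<eta> * (v * W) * norm ?N + \<eta> * v * norm ?N"
    using R S by (intro add_mono mult_right_mono) auto
  also have "\<dots> = v * (\<eta> * ((norm w + 2) * norm ?N))" by (simp add: W_def algebra_simps)
  finally show ?thesis using v(1) by simp
qed

lemma one_sided_tangent_orthogonal:
  fixes A :: "real \<times> real \<Rightarrow> real^3" and G :: "real^3 \<Rightarrow> real \<times> real" and y :: "real \<Rightarrow> real^3"
  assumes dA: "(A has_derivative (\<lambda>z. fst z *\<^sub>R a1 + snd z *\<^sub>R a2)) (at p0 within H)"
    and N: "cross3 a1 a2 \<noteq> 0"
    and G: "\<And>d. d > 0 \<Longrightarrow>
      \<exists>\<rho>>0. \<forall>x\<in>Y. norm (x - A p0) < \<rho> \<longrightarrow> G x \<in> H \<and> A (G x) = x \<and> norm (G x - p0) < d"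
    and y: "(y has_vector_derivative w) (at 0 within {0..r})" "r > 0" "y 0 = A p0" "y ` {0..r} \<subseteq> Y"
  shows "w \<bullet> cross3 a1 a2 = 0"
proof -
  define K where "K = (norm w + 2) * norm (cross3 a1 a2)"
  have K: "K > 0" using N by (simp add: K_def add_nonneg_pos)
  have "\<bar>w \<bullet> cross3 a1 a2\<bar> \<le> 0 + \<epsilon>" if "\<epsilon> > 0" for \<epsilon>
  proof -
    have \<eta>: "0 < min 1 (\<epsilon> / K)" "min 1 (\<epsilon> / K) \<le> 1" using K that by auto
    have "\<bar>w \<bullet> cross3 a1 a2\<bar> \<le> min 1 (\<epsilon> / K) * ((norm w + 2) * norm (cross3 a1 a2))"
      by (rule one_sided_tangent_estimate[OF dA N G y \<eta>])
    also have "\<dots> = min 1 (\<epsilon> / K) * K" by (simp only: K_def)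
    also have "\<dots> \<le> \<epsilon> / K * K" using K by (intro mult_right_mono) auto
    finally show ?thesis using K by simp
  qed
  then show ?thesis using field_le_epsilon[of "\<bar>w \<bullet> cross3 a1 a2\<bar>" 0] by simp
qed

lemma has_derivative_fst_compose:
  fixes f :: "real \<Rightarrow> 'a::real_normed_vector"
  assumes "(f has_vector_derivative f') (at (fst p0) within S)" "fst ` H \<subseteq> S"
  shows "((\<lambda>p. f (fst p)) has_derivative (\<lambda>z. fst z *\<^sub>R f')) (at p0 within H)"
proof -
  have "(f has_derivative (\<lambda>x. x *\<^sub>R f')) (at (fst p0) within fst ` H)"
    using assms unfolding has_vector_derivative_def by (rule has_derivative_subset)
  then show ?thesis
    using has_derivative_in_compose[OF has_derivative_fst[OF has_derivative_ident]] by simp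
qed

section \<open>The origami strips along a space curve\<close>

locale origami_curve =
  fixes a b :: real and c :: "real \<Rightarrow> real^3" and \<alpha> :: "real \<Rightarrow> real"
  assumes a_less_b: "a < b"
    and smooth_c: "smooth_on {a..b} c"
    and unit_speed: "\<forall>t\<in>{a..b}. norm (vd {a..b} c t) = 1"
    and curvature_pos: "\<forall>t\<in>{a..b}. curv {a..b} c t > 0"
    and inj_c: "inj_on c {a..b}"
    and smooth_alpha: "smooth_on {a..b} \<alpha>"
    and alpha_bounds: "\<forall>t\<in>{a..b}. 0 < \<bar>\<alpha> t\<bar> \<and> \<bar>\<alpha> t\<bar> < pi / 2"
begin

abbreviation "I \<equiv> {a..b}"
abbreviation "e \<equiv> tang I c"
abbreviation "n \<equiv> normal I c"

abbreviation "X1 \<equiv> ruling I c \<alpha>"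
abbreviation "X2 \<equiv> ruling I c (\<lambda>t. - \<alpha> t)"

abbreviation sheet :: "(real \<Rightarrow> real^3) \<Rightarrow> real \<times> real \<Rightarrow> real^3" where
  "sheet W \<equiv> \<lambda>p. c (fst p) + snd p *\<^sub>R W (fst p)"

abbreviation "Phi \<equiv> origami_phi I c \<alpha>"
abbreviation "Psi \<equiv> origami_psi I c \<alpha>"

lemma phi_eq: "Phi p = sheet (if 0 \<le> snd p then X1 else X2) p"
  by (simp add: origami_phi_def strip_def)

lemma psi_eq: "Psi p = sheet (if 0 \<le> snd p then X2 else X1) p"
  by (simp add: origami_psi_def strip_def)

lemma Cinf_c: "Cinf_on I c"
  using smooth_c by (rule smooth_on_imp_Cinf_on)

lemma Cinf_tang: "Cinf_on I e"
  unfolding tang_def by (rule Cinf_on_vd(1)[OF a_less_b Cinf_c])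

lemma curv_nonzero: "t \<in> I \<Longrightarrow> curv I c t \<noteq> 0"
  using curvature_pos by force

lemma Cinf_curv: "Cinf_on I (curv I c)"
  unfolding curv_def
  by (intro Cinf_on_norm Cinf_on_vd(1)[OF a_less_b Cinf_tang])
    (metis curv_nonzero curv_def norm_zero)

lemma Cinf_normal: "Cinf_on I n"
proof -
  have "Cinf_on I (\<lambda>t. inverse (curv I c t) *\<^sub>R vd I e t)"
    by (intro Cinf_on_scaleR Cinf_on_inverse Cinf_curv Cinf_on_vd(1)[OF a_less_b Cinf_tang])
      (rule curv_nonzero)
  then show ?thesis by (rule Cinf_on_cong) (simp add: normal_def inverse_eq_divide)
qed

lemma Cinf_binormal: "Cinf_on I (binormal I c)"
  unfolding binormal_def by (intro Cinf_on_cross3 Cinf_tang Cinf_normal)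

lemma Cinf_tors: "Cinf_on I (tors I c)"
  unfolding tors_def by (intro Cinf_on_inner Cinf_binormal Cinf_on_vd(1)[OF a_less_b Cinf_normal])

lemma Cinf_ruling:
  assumes "Cinf_on I \<gamma>" "\<And>t. t \<in> I \<Longrightarrow> sin (\<gamma> t) \<noteq> 0"
  shows "Cinf_on I (ruling I c \<gamma>)"
proof -
  have "Cinf_on I (\<lambda>t. pi / 2 - arctan ((vd I \<gamma> t + tors I c t) / (curv I c t * sin (\<gamma> t))))"
    using curv_nonzero assms(2)
    by (intro Cinf_on_diff Cinf_on_const Cinf_on_arctan Cinf_on_divide Cinf_on_add Cinf_on_mult
        Cinf_tors Cinf_curv Cinf_on_sin assms(1) Cinf_on_vd(1)[OF a_less_b assms(1)]) simp
  then have \<beta>: "Cinf_on I (beta I c \<gamma>)"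
    by (rule Cinf_on_cong) (simp only: beta_def)
  show ?thesis unfolding ruling_def
    by (intro Cinf_on_add Cinf_on_scaleR Cinf_on_cos Cinf_on_sin \<beta> assms(1) Cinf_tang Cinf_normal
        Cinf_binormal)
qed

lemma sin_alpha_nonzero: "t \<in> I \<Longrightarrow> sin (\<alpha> t) \<noteq> 0"
  using alpha_bounds sin_eq_0_pi[of "\<alpha> t"] by force

lemma Cinf_rulings: "Cinf_on I X1" "Cinf_on I X2"
proof -
  have \<alpha>: "Cinf_on I \<alpha>" using smooth_alpha by (rule smooth_on_imp_Cinf_on)
  show "Cinf_on I X1" using Cinf_ruling[OF \<alpha>] sin_alpha_nonzero by blast
  show "Cinf_on I X2"
    using Cinf_ruling[OF Cinf_on_uminus[OF \<alpha>]] sin_alpha_nonzero by simp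
qed

lemma c_has_vector_derivative: "t \<in> I \<Longrightarrow> (c has_vector_derivative e t) (at t within I)"
  unfolding tang_def by (rule Cinf_on_vd(2)[OF a_less_b Cinf_c])

lemma ruling_has_vector_derivative:
  "W \<in> {X1, X2} \<Longrightarrow> t \<in> I \<Longrightarrow> (W has_vector_derivative vd I W t) (at t within I)"
  using Cinf_on_vd(2)[OF a_less_b] Cinf_rulings by blast

lemma norm_tang: "t \<in> I \<Longrightarrow> norm (e t) = 1"
  using unit_speed by (simp add: tang_def)

lemma tang_orthogonal_deriv:
  assumes t: "t \<in> I"
  shows "e t \<bullet> vd I e t = 0"
proof -
  have e': "(e has_vector_derivative vd I e t) (at t within I)"
    by (rule Cinf_on_vd(2)[OF a_less_b Cinf_tang t])
  have d1: "((\<lambda>s. e s \<bullet> e s) has_vector_derivative (e t \<bullet> vd I e t + vd I e t \<bullet> e t))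
      (at t within I)"
    using bounded_bilinear.has_vector_derivative[OF bounded_bilinear_inner e' e'] .
  have d2: "((\<lambda>s. e s \<bullet> e s) has_vector_derivative 0) (at t within I)"
  proof (rule has_vector_derivative_transform[where f="\<lambda>s. 1", OF t])
    show "s \<in> I \<Longrightarrow> e s \<bullet> e s = 1" for s
      using norm_tang[of s] by (simp add: power2_norm_eq_inner[symmetric])
  qed (rule has_vector_derivative_const)
  have "e t \<bullet> vd I e t + vd I e t \<bullet> e t = 0"
    using vector_derivative_within_closed_interval[OF a_less_b t d1]
      vector_derivative_within_closed_interval[OF a_less_b t d2] by simp
  then show ?thesis by (simp add: inner_commute)
qed

lemma norm_normal: "t \<in> I \<Longrightarrow> norm (n t) = 1"
  using curvature_pos by (simp add: normal_def curv_def)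

lemma tang_orthogonal_normal: "t \<in> I \<Longrightarrow> e t \<bullet> n t = 0"
  using tang_orthogonal_deriv by (simp add: normal_def)

lemma sin_beta_pos: "sin (beta I c \<gamma> t) > 0"
proof -
  have "sin (beta I c \<gamma> t) = cos (arctan ((vd I \<gamma> t + tors I c t) / (curv I c t * sin (\<gamma> t))))"
    by (simp add: beta_def sin_diff)
  also have "\<dots> > 0" by (simp add: cos_arctan add_pos_nonneg)
  finally show ?thesis .
qed

lemma ruling_eq_frame_vector:
  "ruling I c \<gamma> t = frame_vector (e t) (n t) (\<gamma> t) (beta I c \<gamma> t)"
  by (simp add: ruling_def binormal_def frame_vector_def)

lemma norm_ruling: "t \<in> I \<Longrightarrow> norm (ruling I c \<gamma> t) = 1"
  unfolding ruling_eq_frame_vector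
  by (rule frame_vector_props(1)[OF norm_tang norm_normal tang_orthogonal_normal])

lemma norm_tang_cross_ruling: "t \<in> I \<Longrightarrow> norm (cross3 (e t) (ruling I c \<gamma> t)) = sin (beta I c \<gamma> t)"
  unfolding ruling_eq_frame_vector
  using frame_vector_props(2)[OF norm_tang norm_normal tang_orthogonal_normal] sin_beta_pos
  by (simp add: abs_of_pos)

lemma tang_rulings_triple_nonzero:
  assumes t: "t \<in> I"
  shows "e t \<bullet> cross3 (X1 t) (X2 t) \<noteq> 0"
proof -
  have "\<bar>\<alpha> t\<bar> < pi / 2" using alpha_bounds t by blast
  then have "cos (\<alpha> t) > 0" by (intro cos_gt_zero_pi) (auto simp only: abs_less_iff)
  then show ?thesis
    unfolding ruling_eq_frame_vector
    using frame_vector_triple[OF norm_tang[OF t] norm_normal[OF t] tang_orthogonal_normal[OF t]]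
      sin_alpha_nonzero[OF t] sin_beta_pos[of \<alpha> t] sin_beta_pos[of "\<lambda>t. - \<alpha> t" t]
    by simp
qed

lemma uniform_frame_bounds:
  obtains m B where "m > 0" "B > 0"
    "\<And>t W. t \<in> I \<Longrightarrow> W \<in> {X1, X2} \<Longrightarrow> m \<le> norm (cross3 (e t) (W t))"
    "\<And>t. t \<in> I \<Longrightarrow> m \<le> \<bar>e t \<bullet> cross3 (X1 t) (X2 t)\<bar>"
    "\<And>t W. t \<in> I \<Longrightarrow> W \<in> {X1, X2} \<Longrightarrow> norm (vd I W t) \<le> B"
proof -
  have I: "compact I" "I \<noteq> {}" using a_less_b by auto
  have cont: "continuous_on I e" "continuous_on I X1" "continuous_on I X2"
    "continuous_on I (vd I X1)" "continuous_on I (vd I X2)"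
    using Cinf_tang Cinf_rulings Cinf_on_vd(1)[OF a_less_b] by (auto intro: Cinf_on_continuous_on)
  define f where "f t = min (min (norm (cross3 (e t) (X1 t))) (norm (cross3 (e t) (X2 t))))
      \<bar>e t \<bullet> cross3 (X1 t) (X2 t)\<bar>" for t
  define g where "g t = norm (vd I X1 t) + norm (vd I X2 t)" for t
  have "continuous_on I f" unfolding f_def by (intro continuous_intros continuous_on_cross cont)
  with I obtain t1 where t1: "t1 \<in> I" "\<And>t. t \<in> I \<Longrightarrow> f t1 \<le> f t"
    using continuous_attains_inf by metis
  have "continuous_on I g" unfolding g_def by (intro continuous_intros cont)
  with I obtain t2 where t2: "\<And>t. t \<in> I \<Longrightarrow> g t \<le> g t2"
    using continuous_attains_sup by metis
  have "f t1 > 0"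
    using norm_tang_cross_ruling[OF t1(1)] sin_beta_pos tang_rulings_triple_nonzero[OF t1(1)]
    by (simp add: f_def)
  moreover have "g t2 + 1 > 0" by (simp add: g_def add_nonneg_pos)
  moreover have "f t1 \<le> norm (cross3 (e t) (W t))" if "t \<in> I" "W \<in> {X1, X2}" for t W
    using t1(2)[OF that(1)] that(2) by (auto simp: f_def)
  moreover have "f t1 \<le> \<bar>e t \<bullet> cross3 (X1 t) (X2 t)\<bar>" if "t \<in> I" for t
    using t1(2)[OF that] by (simp add: f_def)
  moreover have "norm (vd I W t) \<le> g t2 + 1" if "t \<in> I" "W \<in> {X1, X2}" for t W
  proof -
    have "norm (vd I W t) \<le> g t"
      using that(2) norm_ge_zero[of "vd I X1 t"] norm_ge_zero[of "vd I X2 t"] by (auto simp: g_def)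
    then show ?thesis using t2[OF that(1)] by simp
  qed
  ultimately show ?thesis by (rule that)
qed

lemma ruling_lipschitz:
  assumes "W \<in> {X1, X2}" "\<And>t. t \<in> I \<Longrightarrow> norm (vd I W t) \<le> B" "s \<in> I" "s' \<in> I"
  shows "norm (W s - W s') \<le> B * \<bar>s - s'\<bar>"
  using vector_derivative_deviation_bound[of I W "vd I W" 0 B s s'] assms
    ruling_has_vector_derivative by simp

lemma curve_linearization:
  assumes "s \<in> I" "s' \<in> I"
    and osc: "\<And>r. r \<in> I \<Longrightarrow> \<bar>r - s'\<bar> \<le> \<bar>s - s'\<bar> \<Longrightarrow> norm (e r - e s') \<le> \<omega>"
  shows "norm (c s - c s' - (s - s') *\<^sub>R e s') \<le> \<omega> * \<bar>s - s'\<bar>"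
proof (rule vector_derivative_deviation_bound)
  let ?S = "{min s s'..max s s'}"
  have sub: "?S \<subseteq> I" using assms(1,2) by auto
  show "convex ?S" by (rule convex_real_interval)
  show "(c has_vector_derivative e r) (at r within ?S)" if "r \<in> ?S" for r
    using c_has_vector_derivative sub that by (meson has_vector_derivative_within_subset subsetD)
  show "norm (e r - e s') \<le> \<omega>" if "r \<in> ?S" for r
    using that sub by (intro osc) auto
qed auto

lemma curve_separated:
  assumes "\<eta> > 0"
  obtains \<mu> where "\<mu> > 0" "\<And>s s'. s \<in> I \<Longrightarrow> s' \<in> I \<Longrightarrow> \<eta> \<le> \<bar>s - s'\<bar> \<Longrightarrow> \<mu> \<le> norm (c s - c s')"
  using compact_injective_separated[OF compact_Icc Cinf_on_continuous_on[OF Cinf_c] inj_c assms]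
  by (metis dist_norm dist_real_def)

definition tube_injective :: "real \<Rightarrow> bool" where
  "tube_injective \<epsilon> \<longleftrightarrow> (\<forall>s\<in>I. \<forall>s'\<in>I. \<forall>v v' Y Z. \<bar>v\<bar> \<le> \<epsilon> \<longrightarrow> \<bar>v'\<bar> \<le> \<epsilon> \<longrightarrow>
     Y \<in> {X1, X2} \<longrightarrow> Z \<in> {X1, X2} \<longrightarrow> sheet Y (s, v) = sheet Z (s', v') \<longrightarrow> s = s' \<and> v = v')"

definition sheets_immersed :: "real \<Rightarrow> bool" where
  "sheets_immersed \<epsilon> \<longleftrightarrow> (\<forall>s\<in>I. \<forall>v W. \<bar>v\<bar> \<le> \<epsilon> \<longrightarrow> W \<in> {X1, X2} \<longrightarrow>
     cross3 (e s + v *\<^sub>R vd I W s) (W s) \<noteq> 0)"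

lemma sheets_immersed_small:
  obtains \<epsilon> where "\<epsilon> > 0" "sheets_immersed \<epsilon>"
proof -
  obtain m B where m: "m > 0" "\<And>t W. t \<in> I \<Longrightarrow> W \<in> {X1, X2} \<Longrightarrow> m \<le> norm (cross3 (e t) (W t))"
    and B: "B > 0" "\<And>t W. t \<in> I \<Longrightarrow> W \<in> {X1, X2} \<Longrightarrow> norm (vd I W t) \<le> B"
    using uniform_frame_bounds by metis
  have "sheets_immersed (m / (2 * B))"
    unfolding sheets_immersed_def
  proof (intro ballI allI impI)
    fix s v W assume s: "s \<in> I" and v: "\<bar>v\<bar> \<le> m / (2 * B)" and W: "W \<in> {X1, X2}"
    have "norm (cross3 (vd I W s) (W s)) \<le> B"
      using norm_cross3_le[of "vd I W s" "W s"] norm_ruling[OF s] B(2)[OF s W] W by auto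
    then have "\<bar>v\<bar> * norm (cross3 (vd I W s) (W s)) \<le> m / (2 * B) * B"
      using v m(1) B(1) by (intro mult_mono) auto
    then have "norm (v *\<^sub>R cross3 (vd I W s) (W s)) \<le> m / (2 * B) * B" by simp
    also have "\<dots> = m / 2" using B(1) by simp
    finally have small: "norm (v *\<^sub>R cross3 (vd I W s) (W s)) \<le> m / 2" .
    have "m \<le> norm (cross3 (e s) (W s))" by (rule m(2)[OF s W])
    also have "\<dots> \<le> norm (cross3 (e s + v *\<^sub>R vd I W s) (W s)) +
        norm (v *\<^sub>R cross3 (vd I W s) (W s))"
      using norm_triangle_ineq4[of "cross3 (e s + v *\<^sub>R vd I W s) (W s)"
          "v *\<^sub>R cross3 (vd I W s) (W s)"]
      by (simp add: cross_add_left cross_mult_left)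
    finally show "cross3 (e s + v *\<^sub>R vd I W s) (W s) \<noteq> 0" using small m(1) by auto
  qed
  moreover have "m / (2 * B) > 0" using m(1) B(1) by simp
  ultimately show ?thesis using that by blast
qed

lemma tube_locally_injective:
  assumes m: "m > 0" "\<And>t W. t \<in> I \<Longrightarrow> W \<in> {X1, X2} \<Longrightarrow> m \<le> norm (cross3 (e t) (W t))"
      "\<And>t. t \<in> I \<Longrightarrow> m \<le> \<bar>e t \<bullet> cross3 (X1 t) (X2 t)\<bar>"
    and B: "\<And>t W. t \<in> I \<Longrightarrow> W \<in> {X1, X2} \<Longrightarrow> norm (vd I W t) \<le> B" "\<epsilon> * B \<le> m / 12"
    and s: "s \<in> I" "s' \<in> I"
    and osc: "\<And>r. r \<in> I \<Longrightarrow> \<bar>r - s'\<bar> \<le> \<bar>s - s'\<bar> \<Longrightarrow> norm (e r - e s') \<le> m / 12"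
    and v: "\<bar>v\<bar> \<le> \<epsilon>" and YZ: "Y \<in> {X1, X2}" "Z \<in> {X1, X2}"
    and eq: "sheet Y (s, v) = sheet Z (s', v')"
  shows "s = s' \<and> v = v'"
proof -
  let ?d = "s - s'"
  define R where "R = c s - c s' - ?d *\<^sub>R e s'"
  define Q where "Q = v *\<^sub>R (Y s - Y s')"
  have R: "norm R \<le> m / 12 * \<bar>?d\<bar>" unfolding R_def by (rule curve_linearization[OF s osc])
  have "0 \<le> B" using B(1)[OF s(1) YZ(1)] norm_ge_zero order_trans by blast
  have "norm Q = \<bar>v\<bar> * norm (Y s - Y s')" by (simp add: Q_def)
  also have "\<dots> \<le> \<epsilon> * (B * \<bar>?d\<bar>)"
    using ruling_lipschitz[OF YZ(1) _ s] B(1) YZ(1) v \<open>0 \<le> B\<close> by (intro mult_mono) auto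
  also have "\<dots> \<le> m / 12 * \<bar>?d\<bar>"
    using mult_right_mono[OF B(2) abs_ge_zero[of ?d]] by (simp add: mult.assoc)
  finally have Q: "norm Q \<le> m / 12 * \<bar>?d\<bar>" .
  have "?d *\<^sub>R e s' + v *\<^sub>R Y s' - v' *\<^sub>R Z s' = - (R + Q)"
    using eq by (simp add: R_def Q_def algebra_simps)
  then have "norm (?d *\<^sub>R e s' + v *\<^sub>R Y s' - v' *\<^sub>R Z s') = norm (R + Q)"
    by (simp only: norm_minus_cancel)
  also have "\<dots> \<le> norm R + norm Q" by (rule norm_triangle_ineq)
  finally have "norm (?d *\<^sub>R e s' + v *\<^sub>R Y s' - v' *\<^sub>R Z s') \<le> norm R + norm Q" .
  with R Q have small: "norm (?d *\<^sub>R e s' + v *\<^sub>R Y s' - v' *\<^sub>R Z s') \<le> m / 6 * \<bar>?d\<bar>" by simp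
  have unit: "norm (e s') = 1" "norm (Y s') = 1" "norm (Z s') = 1"
    using norm_tang norm_ruling s(2) YZ by auto
  show ?thesis
  proof (cases "Y = Z")
    case True
    have "?d = 0 \<and> v - v' = 0"
      using small True
      by (intro small_pair_combination_eq_0[OF unit(1,2) m(1) m(2)[OF s(2) YZ(1)]])
        (simp add: algebra_simps)
    then show ?thesis by simp
  next
    case False
    with YZ have "\<bar>e s' \<bullet> cross3 (Y s') (Z s')\<bar> = \<bar>e s' \<bullet> cross3 (X1 s') (X2 s')\<bar>"
      using cross_skew[of "X2 s'" "X1 s'"] by auto
    then have "m \<le> \<bar>e s' \<bullet> cross3 (Y s') (Z s')\<bar>" using m(3)[OF s(2)] by simp
    moreover have
      "?d *\<^sub>R e s' + v *\<^sub>R Y s' + (- v') *\<^sub>R Z s' = ?d *\<^sub>R e s' + v *\<^sub>R Y s' - v' *\<^sub>R Z s'"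
      by simp
    ultimately have "?d = 0 \<and> v = 0 \<and> - v' = 0"
      using small by (intro small_triple_combination_eq_0[OF unit m(1)]) simp_all
    then show ?thesis by simp
  qed
qed

lemma tube_injective_small:
  obtains \<epsilon> where "\<epsilon> > 0" "tube_injective \<epsilon>"
proof -
  obtain m B where m: "m > 0" "\<And>t W. t \<in> I \<Longrightarrow> W \<in> {X1, X2} \<Longrightarrow> m \<le> norm (cross3 (e t) (W t))"
      "\<And>t. t \<in> I \<Longrightarrow> m \<le> \<bar>e t \<bullet> cross3 (X1 t) (X2 t)\<bar>"
    and B: "B > 0" "\<And>t W. t \<in> I \<Longrightarrow> W \<in> {X1, X2} \<Longrightarrow> norm (vd I W t) \<le> B"
    using uniform_frame_bounds by metis
  have "uniformly_continuous_on I e"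
    by (rule compact_uniformly_continuous[OF Cinf_on_continuous_on[OF Cinf_tang] compact_Icc])
  moreover have "m / 12 > 0" using m(1) by simp
  ultimately obtain \<eta> where \<eta>: "\<eta> > 0"
    "\<And>x x'. x \<in> I \<Longrightarrow> x' \<in> I \<Longrightarrow> dist x' x < \<eta> \<Longrightarrow> dist (e x') (e x) < m / 12"
    unfolding uniformly_continuous_on_def by metis
  obtain \<mu> where \<mu>: "\<mu> > 0"
    "\<And>s s'. s \<in> I \<Longrightarrow> s' \<in> I \<Longrightarrow> \<eta> \<le> \<bar>s - s'\<bar> \<Longrightarrow> \<mu> \<le> norm (c s - c s')"
    using curve_separated[OF \<eta>(1)] by blast
  define \<epsilon> where "\<epsilon> = min (\<mu> / 4) (m / (12 * B))"
  have "\<epsilon> * B \<le> m / (12 * B) * B" using B(1) by (intro mult_right_mono) (auto simp: \<epsilon>_def)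
  then have \<epsilon>: "\<epsilon> > 0" "\<epsilon> * B \<le> m / 12" "2 * \<epsilon> < \<mu>"
    using \<mu>(1) m(1) B(1) by (auto simp: \<epsilon>_def)
  have "tube_injective \<epsilon>"
    unfolding tube_injective_def
  proof (intro ballI allI impI)
    fix s s' v v' Y Z
    assume s: "s \<in> I" "s' \<in> I" and v: "\<bar>v\<bar> \<le> \<epsilon>" "\<bar>v'\<bar> \<le> \<epsilon>"
      and YZ: "Y \<in> {X1, X2}" "Z \<in> {X1, X2}" and eq: "sheet Y (s, v) = sheet Z (s', v')"
    show "s = s' \<and> v = v'"
    proof (cases "\<eta> \<le> \<bar>s - s'\<bar>")
      case True
      have "c s - c s' = (c s + v *\<^sub>R Y s) - c s' - v *\<^sub>R Y s" by simp
      also have "\<dots> = v' *\<^sub>R Z s' - v *\<^sub>R Y s" using eq by simp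
      finally have diff: "c s - c s' = v' *\<^sub>R Z s' - v *\<^sub>R Y s" .
      have "\<mu> \<le> norm (c s - c s')" by (rule \<mu>(2)[OF s True])
      also have "\<dots> = norm (v' *\<^sub>R Z s' - v *\<^sub>R Y s)" by (simp only: diff)
      also have "\<dots> \<le> \<bar>v'\<bar> + \<bar>v\<bar>"
        using norm_triangle_ineq4[of "v' *\<^sub>R Z s'" "v *\<^sub>R Y s"] norm_ruling s YZ by auto
      finally show ?thesis using v \<epsilon>(3) by linarith
    next
      case False
      have osc: "norm (e r - e s') \<le> m / 12" if "r \<in> I" "\<bar>r - s'\<bar> \<le> \<bar>s - s'\<bar>" for r
        using \<eta>(2)[OF s(2) that(1)] that(2) False by (simp add: dist_norm)
      show ?thesis
        by (rule tube_locally_injective[where m=m and B=B and \<epsilon>=\<epsilon> and Y=Y and Z=Z and v'=v'])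
          (fact m B(2) \<epsilon>(2) s osc v(1) YZ eq)+
    qed
  qed
  with \<epsilon>(1) that show ?thesis by blast
qed

lemma tube_injective_mono:
  assumes "tube_injective \<epsilon>" "\<epsilon>' \<le> \<epsilon>"
  shows "tube_injective \<epsilon>'"
  unfolding tube_injective_def
proof (intro ballI allI impI)
  fix s s' v v' Y Z
  assume "s \<in> I" "s' \<in> I" "\<bar>v\<bar> \<le> \<epsilon>'" "\<bar>v'\<bar> \<le> \<epsilon>'" "Y \<in> {X1, X2}" "Z \<in> {X1, X2}"
    "sheet Y (s, v) = sheet Z (s', v')"
  moreover have "\<bar>v\<bar> \<le> \<epsilon>" "\<bar>v'\<bar> \<le> \<epsilon>" using calculation(3,4) assms(2) by linarith+
  ultimately show "s = s' \<and> v = v'" using assms(1) unfolding tube_injective_def by blast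
qed

lemma sheets_immersed_mono:
  assumes "sheets_immersed \<epsilon>" "\<epsilon>' \<le> \<epsilon>"
  shows "sheets_immersed \<epsilon>'"
  unfolding sheets_immersed_def
proof (intro ballI allI impI)
  fix s v W assume "s \<in> I" "\<bar>v\<bar> \<le> \<epsilon>'" "W \<in> {X1, X2}"
  moreover have "\<bar>v\<bar> \<le> \<epsilon>" using calculation(2) assms(2) by linarith
  ultimately show "cross3 (e s + v *\<^sub>R vd I W s) (W s) \<noteq> 0"
    using assms(1) unfolding sheets_immersed_def by blast
qed

lemma small_tube:
  obtains \<epsilon>0 where "\<epsilon>0 > 0" "tube_injective \<epsilon>0" "sheets_immersed \<epsilon>0"
proof -
  obtain \<epsilon>1 \<epsilon>2 where "\<epsilon>1 > 0" "tube_injective \<epsilon>1" "\<epsilon>2 > 0" "sheets_immersed \<epsilon>2"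
    using tube_injective_small sheets_immersed_small by metis
  then show ?thesis
    using tube_injective_mono sheets_immersed_mono
    by (intro that[of "min \<epsilon>1 \<epsilon>2"]) (simp_all add: min_def)
qed

lemma sheet_continuous_on:
  assumes "W \<in> {X1, X2}" "fst ` H \<subseteq> I"
  shows "continuous_on H (sheet W)"
proof -
  have "continuous_on I c" "continuous_on I W"
    using assms(1) Cinf_c Cinf_rulings by (auto intro: Cinf_on_continuous_on)
  then have "continuous_on H (\<lambda>p. c (fst p))" "continuous_on H (\<lambda>p. W (fst p))"
    using assms(2)
    by (auto intro: continuous_on_compose2[OF _ continuous_on_fst[OF continuous_on_id]])
  then show ?thesis
    by (intro continuous_on_add continuous_on_scaleR continuous_on_snd[OF continuous_on_id])
qed

lemma sheet_has_derivative:
  assumes "W \<in> {X1, X2}" "p0 \<in> H" "fst ` H \<subseteq> I"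
  shows "(sheet W has_derivative
      (\<lambda>z. fst z *\<^sub>R (e (fst p0) + snd p0 *\<^sub>R vd I W (fst p0)) + snd z *\<^sub>R W (fst p0)))
      (at p0 within H)"
proof -
  have t: "fst p0 \<in> I" using assms(2,3) by blast
  have "((\<lambda>p. c (fst p) + snd p *\<^sub>R W (fst p)) has_derivative
      (\<lambda>z. fst z *\<^sub>R e (fst p0) + (snd p0 *\<^sub>R (fst z *\<^sub>R vd I W (fst p0)) + snd z *\<^sub>R W (fst p0))))
      (at p0 within H)"
    by (intro has_derivative_add has_derivative_scaleR has_derivative_snd[OF has_derivative_ident]
        has_derivative_fst_compose[OF c_has_vector_derivative[OF t] assms(3)]
        has_derivative_fst_compose[OF ruling_has_vector_derivative[OF assms(1) t] assms(3)])
  then show ?thesis by (rule has_derivative_eq_rhs) (simp add: fun_eq_iff algebra_simps)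
qed

lemma psi_inverse:
  assumes "tube_injective \<epsilon>"
  defines "K \<equiv> I \<times> {-\<epsilon>..\<epsilon>}"
  obtains G where "\<And>y. y \<in> Psi ` K \<Longrightarrow> G y \<in> K \<and> Psi (G y) = y"
    "\<And>p d. p \<in> K \<Longrightarrow> d > 0 \<Longrightarrow> \<exists>\<rho>>0. \<forall>y\<in>Psi ` K. norm (y - Psi p) < \<rho> \<longrightarrow> norm (G y - p) < d"
proof
  have K: "compact K" unfolding K_def by (intro compact_Times compact_Icc)
  have "inj_on Psi K"
  proof (rule inj_onI)
    fix p q assume "p \<in> K" "q \<in> K" "Psi p = Psi q"
    moreover define Y Z
      where "Y = (if 0 \<le> snd p then X2 else X1)" "Z = (if 0 \<le> snd q then X2 else X1)"
    ultimately have "fst p \<in> I" "fst q \<in> I" "\<bar>snd p\<bar> \<le> \<epsilon>" "\<bar>snd q\<bar> \<le> \<epsilon>"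
      "Y \<in> {X1, X2}" "Z \<in> {X1, X2}" "sheet Y (fst p, snd p) = sheet Z (fst q, snd q)"
      by (auto simp: K_def psi_eq)
    then have "fst p = fst q \<and> snd p = snd q"
      using assms(1) unfolding tube_injective_def by blast
    then show "p = q" by (simp add: prod_eq_iff)
  qed
  then have inv: "\<forall>x\<in>K. inv_into K Psi (Psi x) = x" by simp
  let ?s = "K \<inter> {p. 0 \<le> snd p}" and ?t = "K \<inter> {p. snd p \<le> 0}"
  have "closed {p :: real \<times> real. 0 \<le> snd p}" "closed {p :: real \<times> real. snd p \<le> 0}"
    by (intro closed_Collect_le continuous_intros)+
  then have "closed ?s" "closed ?t"
    using compact_imp_closed[OF K] by (simp_all add: closed_Int)
  moreover have "continuous_on ?s (sheet X2)" "continuous_on ?t (sheet X1)"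
    by (intro sheet_continuous_on; force simp: K_def)+
  ultimately have "continuous_on (?s \<union> ?t) (\<lambda>p. if 0 \<le> snd p then sheet X2 p else sheet X1 p)"
    by (intro continuous_on_cases) auto
  moreover have "?s \<union> ?t = K" by auto
  moreover have "Psi = (\<lambda>p. if 0 \<le> snd p then sheet X2 p else sheet X1 p)"
    by (simp add: fun_eq_iff psi_eq)
  ultimately have "continuous_on K Psi" by simp
  then have cont: "continuous_on (Psi ` K) (inv_into K Psi)"
    using K inv by (rule continuous_on_inv)
  show "inv_into K Psi y \<in> K \<and> Psi (inv_into K Psi y) = y" if "y \<in> Psi ` K" for y
    using that by (simp add: inv_into_into f_inv_into_f)
  show "\<exists>\<rho>>0. \<forall>y\<in>Psi ` K. norm (y - Psi p) < \<rho> \<longrightarrow> norm (inv_into K Psi y - p) < d"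
    if "p \<in> K" "d > 0" for p d
    using cont that inv unfolding continuous_on_iff by (metis dist_norm imageI)
qed

lemma psi_sheet_local_inverse:
  assumes "tube_injective \<epsilon>" and p1: "p1 \<in> I \<times> {-\<epsilon>..\<epsilon>}" "snd p1 \<noteq> 0"
  defines "W \<equiv> if 0 \<le> snd p1 then X2 else X1"
  obtains G where "\<And>d. d > 0 \<Longrightarrow> \<exists>\<rho>>0. \<forall>x\<in>Psi ` (I \<times> {-\<epsilon>..\<epsilon>}). norm (x - sheet W p1) < \<rho> \<longrightarrow>
      G x \<in> I \<times> {-\<epsilon>..\<epsilon>} \<and> sheet W (G x) = x \<and> norm (G x - p1) < d"
proof -
  let ?K = "I \<times> {-\<epsilon>..\<epsilon>}"
  obtain G where G: "\<And>y. y \<in> Psi ` ?K \<Longrightarrow> G y \<in> ?K \<and> Psi (G y) = y"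
    "\<And>p d. p \<in> ?K \<Longrightarrow> d > 0 \<Longrightarrow> \<exists>\<rho>>0. \<forall>y\<in>Psi ` ?K. norm (y - Psi p) < \<rho> \<longrightarrow> norm (G y - p) < d"
    using psi_inverse[OF assms(1)] by blast
  have Psi_p1: "Psi p1 = sheet W p1" by (simp add: psi_eq W_def)
  have "\<exists>\<rho>>0. \<forall>x\<in>Psi ` ?K. norm (x - sheet W p1) < \<rho> \<longrightarrow>
      G x \<in> ?K \<and> sheet W (G x) = x \<and> norm (G x - p1) < d" if "d > 0" for d
  proof -
    have "min d \<bar>snd p1\<bar> > 0" using that p1(2) by simp
    then obtain \<rho> where \<rho>: "\<rho> > 0"
      "\<forall>y\<in>Psi ` ?K. norm (y - Psi p1) < \<rho> \<longrightarrow> norm (G y - p1) < min d \<bar>snd p1\<bar>"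
      using G(2)[OF p1(1)] by blast
    have "G x \<in> ?K \<and> sheet W (G x) = x \<and> norm (G x - p1) < d"
      if "x \<in> Psi ` ?K" "norm (x - sheet W p1) < \<rho>" for x
    proof -
      have "norm (x - Psi p1) < \<rho>" using that(2) Psi_p1 by simp
      with \<rho>(2) that(1) have close: "norm (G x - p1) < min d \<bar>snd p1\<bar>" by blast
      have "norm (snd (G x - p1)) \<le> norm (fst (G x - p1), snd (G x - p1))" by (rule norm_snd_le)
      then have "\<bar>snd (G x) - snd p1\<bar> \<le> norm (G x - p1)" by (simp only: prod.collapse) simp
      then have "(0 \<le> snd (G x)) = (0 \<le> snd p1)"
        using close p1(2) by (auto simp: abs_if split: if_splits)
      then have "Psi (G x) = sheet W (G x)" by (simp add: psi_eq W_def)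
      then show ?thesis using G(1)[OF that(1)] close by simp
    qed
    with \<rho>(1) show ?thesis by blast
  qed
  then show ?thesis by (rule that)
qed

text \<open>Away from the curve, \<open>\<psi>\<close> is locally one immersed sheet, so curves in its image leave
  each point tangentially to that sheet.\<close>

lemma psi_one_sided_tangents:
  assumes "tube_injective \<epsilon>" "sheets_immersed \<epsilon>"
    and p1: "p1 \<in> I \<times> {-\<epsilon>..\<epsilon>}" "snd p1 \<noteq> 0"
  obtains N where "N \<noteq> 0"
    "\<And>y w r. (y has_vector_derivative w) (at 0 within {0..r}) \<Longrightarrow> r > 0 \<Longrightarrow> y 0 = Psi p1 \<Longrightarrow>
      y ` {0..r} \<subseteq> Psi ` (I \<times> {-\<epsilon>..\<epsilon>}) \<Longrightarrow> w \<bullet> N = 0"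
proof -
  define W where "W = (if 0 \<le> snd p1 then X2 else X1)"
  obtain G where G: "\<And>d. d > 0 \<Longrightarrow> \<exists>\<rho>>0. \<forall>x\<in>Psi ` (I \<times> {-\<epsilon>..\<epsilon>}). norm (x - sheet W p1) < \<rho> \<longrightarrow>
      G x \<in> I \<times> {-\<epsilon>..\<epsilon>} \<and> sheet W (G x) = x \<and> norm (G x - p1) < d"
    using psi_sheet_local_inverse[OF assms(1) p1] unfolding W_def by blast
  have W: "W \<in> {X1, X2}" by (simp add: W_def)
  define a1 where "a1 = e (fst p1) + snd p1 *\<^sub>R vd I W (fst p1)"
  define a2 where "a2 = W (fst p1)"
  have dA: "(sheet W has_derivative (\<lambda>z. fst z *\<^sub>R a1 + snd z *\<^sub>R a2)) (at p1 within I \<times> {-\<epsilon>..\<epsilon>})"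
    unfolding a1_def a2_def by (rule sheet_has_derivative[OF W p1(1)]) auto
  have N: "cross3 a1 a2 \<noteq> 0"
    using assms(2) p1(1) W unfolding sheets_immersed_def a1_def a2_def by auto
  have "Psi p1 = sheet W p1" by (simp add: psi_eq W_def)
  with N show ?thesis
    by (intro that[of "cross3 a1 a2"] one_sided_tangent_orthogonal[OF dA N G]) auto
qed

subsection \<open>The isometry preserves the curve\<close>

lemma curve_one_sided_tangent:
  assumes "t \<in> I"
  obtains \<sigma> r where "\<sigma> \<in> {1, -1}" "r > 0" "\<And>v. v \<in> {0..r} \<Longrightarrow> t + \<sigma> * v \<in> I"
    "((\<lambda>v. c (t + \<sigma> * v)) has_vector_derivative \<sigma> *\<^sub>R e t) (at 0 within {0..r})"
proof -
  obtain \<sigma> r where \<sigma>: "\<sigma> \<in> {1, -1}" "r > 0" "\<And>v. v \<in> {0..r} \<Longrightarrow> t + \<sigma> * v \<in> I"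
  proof (cases "t < b")
    case True
    then show ?thesis using assms by (intro that[of 1 "b - t"]) auto
  next
    case False
    then show ?thesis using assms a_less_b by (intro that[of "-1" "b - a"]) auto
  qed
  have "((\<lambda>v. t + \<sigma> * v) has_vector_derivative \<sigma>) (at 0 within {0..r})"
    by (auto intro!: derivative_eq_intros
        simp: has_real_derivative_iff_has_vector_derivative[symmetric])
  moreover have "(c has_vector_derivative e t)
      (at ((\<lambda>v. t + \<sigma> * v) 0) within (\<lambda>v. t + \<sigma> * v) ` {0..r})"
    using c_has_vector_derivative[OF assms] \<sigma>(3)
    by (auto intro: has_vector_derivative_within_subset)
  ultimately have "((c \<circ> (\<lambda>v. t + \<sigma> * v)) has_vector_derivative \<sigma> *\<^sub>R e t) (at 0 within {0..r})"
    by (rule vector_diff_chain_within)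
  with \<sigma> show ?thesis by (intro that) (auto simp: o_def)
qed

lemma Omega_subset: "Omega I \<delta> \<subseteq> I \<times> {-\<delta>..\<delta>}"
  by (auto simp: Omega_def)

lemma Omega_memI: "s \<in> I \<Longrightarrow> \<bar>v\<bar> < \<delta> \<Longrightarrow> (s, v) \<in> Omega I \<delta>"
  by (auto simp: Omega_def abs_less_iff)

lemma phi_one_sided_directions:
  assumes t: "t \<in> I" and "\<delta> > 0"
  obtains \<sigma> r where "\<sigma> \<in> {1, -1}" "r > 0"
    "\<And>w. w \<in> {X1 t, - X2 t, \<sigma> *\<^sub>R e t} \<Longrightarrow> \<exists>y. (y has_vector_derivative w) (at 0 within {0..r}) \<and>
      y 0 = c t \<and> y ` {0..r} \<subseteq> Phi ` Omega I \<delta>"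
proof -
  obtain \<sigma> r' where \<sigma>: "\<sigma> \<in> {1, -1}" "r' > 0" "\<And>v. v \<in> {0..r'} \<Longrightarrow> t + \<sigma> * v \<in> I"
    and curve: "((\<lambda>v. c (t + \<sigma> * v)) has_vector_derivative \<sigma> *\<^sub>R e t) (at 0 within {0..r'})"
    using curve_one_sided_tangent[OF t] by blast
  define r where "r = min r' (\<delta> / 2)"
  have r: "r > 0" "r \<le> r'" "r < \<delta>" using \<sigma>(2) \<open>\<delta> > 0\<close> by (auto simp: r_def)
  have ray: "\<exists>y. (y has_vector_derivative W t) (at 0 within {0..r}) \<and> y 0 = c t \<and>
      y ` {0..r} \<subseteq> Phi ` Omega I \<delta>"
    if "W = X1 \<and> s = 1 \<or> W = (\<lambda>t. - X2 t) \<and> s = -1" for W and s :: real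
  proof (intro exI conjI)
    show "((\<lambda>v. c t + v *\<^sub>R W t) has_vector_derivative W t) (at 0 within {0..r})"
      by (auto intro!: derivative_eq_intros)
    have "c t + v *\<^sub>R W t = Phi (t, s * v)" if "v \<ge> 0" for v
      using \<open>W = X1 \<and> s = 1 \<or> W = (\<lambda>t. - X2 t) \<and> s = -1\<close> that by (auto simp: phi_eq)
    then show "(\<lambda>v. c t + v *\<^sub>R W t) ` {0..r} \<subseteq> Phi ` Omega I \<delta>"
      using Omega_memI[OF t] r \<open>W = X1 \<and> s = 1 \<or> W = (\<lambda>t. - X2 t) \<and> s = -1\<close> by force
  qed simp
  have "\<exists>y. (y has_vector_derivative \<sigma> *\<^sub>R e t) (at 0 within {0..r}) \<and> y 0 = c t \<and>
      y ` {0..r} \<subseteq> Phi ` Omega I \<delta>"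
  proof (intro exI conjI)
    show "((\<lambda>v. c (t + \<sigma> * v)) has_vector_derivative \<sigma> *\<^sub>R e t) (at 0 within {0..r})"
      by (rule has_vector_derivative_within_subset[OF curve]) (use r(2) in auto)
    have "c (t + \<sigma> * v) = Phi (t + \<sigma> * v, 0)" for v by (simp add: phi_eq)
    then show "(\<lambda>v. c (t + \<sigma> * v)) ` {0..r} \<subseteq> Phi ` Omega I \<delta>"
      using Omega_memI[OF \<sigma>(3), of _ 0 \<delta>] r(2) \<open>\<delta> > 0\<close> by fastforce
  qed simp
  with ray[of X1 1] ray[of "\<lambda>t. - X2 t" "-1"] \<sigma>(1) r(1) show ?thesis
    by (intro that[of \<sigma> r]) auto
qed

text \<open>A point $T(\mathbf c(t))$ off the curve would lie on a single immersed sheet of \<open>\<psi>\<close>, but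
  \<open>\<phi>\<close> provides curves through it in the three independent directions $L\,e$, $L X_1$, $-L X_2$
  ($L$ the linear part of $T$).\<close>

lemma isometry_maps_curve_into_curve:
  assumes tube: "tube_injective \<epsilon>" "sheets_immersed \<epsilon>" and \<delta>: "0 < \<delta>" "\<delta> \<le> \<epsilon>"
    and T: "isometry3 T" "T ` Phi ` Omega I \<delta> \<subseteq> Psi ` Omega I \<epsilon>" and t: "t \<in> I"
  shows "T (c t) \<in> c ` I"
proof (rule ccontr)
  assume off: "T (c t) \<notin> c ` I"
  obtain b L where L: "orthogonal_transformation L" "\<And>x. T x = b + L x"
    using isometry3_affine[OF T(1)] by blast
  have "(t, 0) \<in> Omega I \<delta>" "Phi (t, 0) = c t" using Omega_memI[OF t] \<delta>(1) by (auto simp: phi_eq)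
  then obtain p1 where p1: "p1 \<in> Omega I \<epsilon>" "Psi p1 = T (c t)" using T(2) by force
  then have p1K: "p1 \<in> I \<times> {-\<epsilon>..\<epsilon>}" using Omega_subset by blast
  have "snd p1 \<noteq> 0"
  proof
    assume "snd p1 = 0"
    then have "T (c t) = c (fst p1)" using p1(2) by (simp add: psi_eq)
    then show False using off p1K by (auto simp: mem_Times_iff)
  qed
  then obtain N where N: "N \<noteq> 0"
    and tangent: "\<And>y w r. (y has_vector_derivative w) (at 0 within {0..r}) \<Longrightarrow>
      r > 0 \<Longrightarrow> y 0 = Psi p1 \<Longrightarrow> y ` {0..r} \<subseteq> Psi ` (I \<times> {-\<epsilon>..\<epsilon>}) \<Longrightarrow> w \<bullet> N = 0"
    using psi_one_sided_tangents[OF tube p1K] by blast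
  obtain \<sigma> r where \<sigma>: "\<sigma> \<in> {1, -1}" "r > 0" and dirs: "\<And>w. w \<in> {X1 t, - X2 t, \<sigma> *\<^sub>R e t} \<Longrightarrow>
      \<exists>y. (y has_vector_derivative w) (at 0 within {0..r}) \<and> y 0 = c t \<and>
        y ` {0..r} \<subseteq> Phi ` Omega I \<delta>"
    using phi_one_sided_directions[OF t \<delta>(1)] by blast
  have orth: "L w \<bullet> N = 0" if w: "w \<in> {X1 t, - X2 t, \<sigma> *\<^sub>R e t}" for w
  proof -
    obtain y where y: "(y has_vector_derivative w) (at 0 within {0..r})" "y 0 = c t"
      "y ` {0..r} \<subseteq> Phi ` Omega I \<delta>"
      using dirs[OF w] by blast
    have "((\<lambda>v. b + L (y v)) has_vector_derivative L w) (at 0 within {0..r})"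
      by (rule orthogonal_transformation_affine_has_vector_derivative[OF L(1) y(1)])
    moreover have "(\<lambda>v. b + L (y v)) ` {0..r} \<subseteq> Psi ` (I \<times> {-\<epsilon>..\<epsilon>})"
    proof clarify
      fix v :: real assume "v \<in> {0..r}"
      then have "T (y v) \<in> Psi ` Omega I \<epsilon>" using y(3) T(2) by blast
      then show "b + L (y v) \<in> Psi ` (I \<times> {-\<epsilon>..\<epsilon>})" using Omega_subset L(2)[of "y v"] by auto
    qed
    ultimately show ?thesis using \<sigma>(2) y(2) p1(2) L(2)[of "c t"] by (intro tangent) auto
  qed
  have linL: "linear L" using L(1) by (rule orthogonal_transformation_linear)
  obtain z where z: "N = L z" using orthogonal_transformation_surj[OF L(1)] by (metis surjD)
  have "L (X1 t) \<bullet> L z = 0" "L (X2 t) \<bullet> L z = 0" "L (e t) \<bullet> L z = 0"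
    using orth[of "X1 t"] orth[of "- X2 t"] orth[of "\<sigma> *\<^sub>R e t"] \<sigma>(1) z
      linear_neg[OF linL] linear_scale[OF linL] by auto
  then have "z \<bullet> e t = 0" "z \<bullet> X1 t = 0" "z \<bullet> X2 t = 0"
    using L(1) unfolding orthogonal_transformation_def by (simp_all add: inner_commute)
  then have "z = 0" by (rule triple_nonzero_orthogonal_eq_0[OF tang_rulings_triple_nonzero[OF t]])
  then show False using N z linear_0[OF linL] by simp
qed

subsection \<open>The points $\mathbf c(a) + v X_1(a)$\<close>

lemma dual_sheet_avoids_ray:
  obtains d where "d > 0" "\<And>p v. p \<in> I \<times> UNIV \<Longrightarrow> norm (p - (a, 0)) < d \<Longrightarrow> v > 0 \<Longrightarrow>
    sheet X2 p \<noteq> c a + v *\<^sub>R X1 a"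
proof -
  have aI: "a \<in> I" using a_less_b by simp
  define E u Y where "E = e a" "u = X1 a" "Y = X2 a"
  have D: "(sheet X2 has_derivative (\<lambda>z. fst z *\<^sub>R E + snd z *\<^sub>R Y)) (at (a, 0) within I \<times> UNIV)"
    using sheet_has_derivative[of X2 "(a, 0)" "I \<times> UNIV"] aI by (simp add: E_u_Y_def)
  have "norm (cross3 E Y) > 0"
    using norm_tang_cross_ruling[OF aI] sin_beta_pos by (simp add: E_u_Y_def)
  then have N: "cross3 E Y \<noteq> 0" by auto
  have "u \<bullet> cross3 E Y \<noteq> 0"
    using tang_rulings_triple_nonzero[OF aI] cross_triple[of u E Y] cross_triple[of E Y u]
    by (metis E_u_Y_def cross_skew inner_commute inner_minus_left neg_equal_0_iff_equal)
  then obtain \<eta> where \<eta>: "\<eta> > 0" "\<And>v h k. 0 \<le> v \<Longrightarrow> \<eta> * v \<le> norm (v *\<^sub>R u - (h *\<^sub>R E + k *\<^sub>R Y))"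
    using plane_distance_lower_bound by blast
  have "\<eta> / 2 > 0" using \<eta>(1) by simp
  then obtain d where d: "d > 0" "\<And>p. p \<in> I \<times> UNIV \<Longrightarrow> norm (p - (a, 0)) < d \<Longrightarrow>
      norm (sheet X2 p - sheet X2 (a, 0) - (fst (p - (a, 0)) *\<^sub>R E + snd (p - (a, 0)) *\<^sub>R Y))
        \<le> \<eta> / 2 * norm (sheet X2 p - sheet X2 (a, 0))"
    using injective_derivative_remainder[OF D N] by blast
  show ?thesis
  proof (rule that[OF d(1)])
    fix p :: "real \<times> real" and v :: real
    assume p: "p \<in> I \<times> UNIV" "norm (p - (a, 0)) < d" and "v > 0"
    show "sheet X2 p \<noteq> c a + v *\<^sub>R X1 a"
    proof
      assume "sheet X2 p = c a + v *\<^sub>R X1 a"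
      then have "norm (v *\<^sub>R u - (fst (p - (a, 0)) *\<^sub>R E + snd (p - (a, 0)) *\<^sub>R Y)) \<le> \<eta> / 2 * v"
        using d(2)[OF p] norm_ruling[OF aI] \<open>v > 0\<close> by (simp add: E_u_Y_def)
      moreover have "\<eta> * v \<le> norm (v *\<^sub>R u - (fst (p - (a, 0)) *\<^sub>R E + snd (p - (a, 0)) *\<^sub>R Y))"
        using \<eta>(2) \<open>v > 0\<close> by simp
      moreover have "\<eta> / 2 * v < \<eta> * v" using \<eta>(1) \<open>v > 0\<close> by simp
      ultimately show False by linarith
    qed
  qed
qed

lemma strip_half_sheet_avoids_ray:
  obtains d where "d > 0" "\<And>p v. p \<in> I \<times> UNIV \<Longrightarrow> norm (p - (a, 0)) < d \<Longrightarrow> snd p \<le> 0 \<Longrightarrow>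
    v > 0 \<Longrightarrow> sheet X1 p \<noteq> c a + v *\<^sub>R X1 a"
proof -
  have aI: "a \<in> I" using a_less_b by simp
  define E u where "E = e a" "u = X1 a"
  have D: "(sheet X1 has_derivative (\<lambda>z. fst z *\<^sub>R E + snd z *\<^sub>R u)) (at (a, 0) within I \<times> UNIV)"
    using sheet_has_derivative[of X1 "(a, 0)" "I \<times> UNIV"] aI by (simp add: E_u_def)
  have "norm (cross3 E u) > 0"
    using norm_tang_cross_ruling[OF aI] sin_beta_pos by (simp add: E_u_def)
  then have N: "cross3 E u \<noteq> 0" by auto
  then obtain \<eta> where \<eta>: "\<eta> > 0"
    "\<And>v h k. 0 \<le> v \<Longrightarrow> k \<le> 0 \<Longrightarrow> \<eta> * v \<le> norm (v *\<^sub>R u - (h *\<^sub>R E + k *\<^sub>R u))"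
    using half_plane_distance_lower_bound by blast
  have "\<eta> / 2 > 0" using \<eta>(1) by simp
  then obtain d where d: "d > 0" "\<And>p. p \<in> I \<times> UNIV \<Longrightarrow> norm (p - (a, 0)) < d \<Longrightarrow>
      norm (sheet X1 p - sheet X1 (a, 0) - (fst (p - (a, 0)) *\<^sub>R E + snd (p - (a, 0)) *\<^sub>R u))
        \<le> \<eta> / 2 * norm (sheet X1 p - sheet X1 (a, 0))"
    using injective_derivative_remainder[OF D N] by blast
  show ?thesis
  proof (rule that[OF d(1)])
    fix p :: "real \<times> real" and v :: real
    assume p: "p \<in> I \<times> UNIV" "norm (p - (a, 0)) < d" and "snd p \<le> 0" "v > 0"
    show "sheet X1 p \<noteq> c a + v *\<^sub>R X1 a"
    proof
      assume "sheet X1 p = c a + v *\<^sub>R X1 a"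
      then have "norm (v *\<^sub>R u - (fst (p - (a, 0)) *\<^sub>R E + snd (p - (a, 0)) *\<^sub>R u)) \<le> \<eta> / 2 * v"
        using d(2)[OF p] norm_ruling[OF aI] \<open>v > 0\<close> by (simp add: E_u_def)
      moreover have "\<eta> * v \<le> norm (v *\<^sub>R u - (fst (p - (a, 0)) *\<^sub>R E + snd (p - (a, 0)) *\<^sub>R u))"
        using \<eta>(2) \<open>v > 0\<close> \<open>snd p \<le> 0\<close> by simp
      moreover have "\<eta> / 2 * v < \<eta> * v" using \<eta>(1) \<open>v > 0\<close> by simp
      ultimately show False by linarith
    qed
  qed
qed

text \<open>Near $\mathbf c(a)$ the image of \<open>\<psi>\<close> consists of the sheet of $\check f$ and the half-sheet
  $v \le 0$ of $f$, and the points $\mathbf c(a) + v X_1(a)$, $v > 0$, lie on neither.\<close>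

lemma psi_avoids_ray:
  assumes "tube_injective \<epsilon>" "0 \<le> \<epsilon>"
  obtains \<rho> where "\<rho> > 0" "\<And>v. 0 < v \<Longrightarrow> v < \<rho> \<Longrightarrow> c a + v *\<^sub>R X1 a \<notin> Psi ` (I \<times> {-\<epsilon>..\<epsilon>})"
proof -
  let ?K = "I \<times> {-\<epsilon>..\<epsilon>}"
  have aI: "a \<in> I" using a_less_b by simp
  obtain G where G: "\<And>y. y \<in> Psi ` ?K \<Longrightarrow> G y \<in> ?K \<and> Psi (G y) = y"
    "\<And>p d. p \<in> ?K \<Longrightarrow> d > 0 \<Longrightarrow> \<exists>\<rho>>0. \<forall>y\<in>Psi ` ?K. norm (y - Psi p) < \<rho> \<longrightarrow> norm (G y - p) < d"
    using psi_inverse[OF assms(1)] by blast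
  obtain d1 where d1: "d1 > 0"
    and X1: "\<And>p v. p \<in> I \<times> UNIV \<Longrightarrow> norm (p - (a, 0)) < d1 \<Longrightarrow> snd p \<le> 0 \<Longrightarrow> v > 0 \<Longrightarrow>
      sheet X1 p \<noteq> c a + v *\<^sub>R X1 a"
    using strip_half_sheet_avoids_ray by blast
  obtain d2 where d2: "d2 > 0"
    and X2: "\<And>p v. p \<in> I \<times> UNIV \<Longrightarrow> norm (p - (a, 0)) < d2 \<Longrightarrow> v > 0 \<Longrightarrow>
      sheet X2 p \<noteq> c a + v *\<^sub>R X1 a"
    using dual_sheet_avoids_ray by blast
  have "(a, 0) \<in> ?K" "Psi (a, 0) = c a" using aI assms(2) by (auto simp: psi_eq)
  then obtain \<rho> where \<rho>: "\<rho> > 0"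
    "\<forall>y\<in>Psi ` ?K. norm (y - c a) < \<rho> \<longrightarrow> norm (G y - (a, 0)) < min d1 d2"
    using G(2)[of "(a, 0)" "min d1 d2"] d1 d2 by auto
  show ?thesis
  proof (rule that[OF \<rho>(1)])
    fix v assume v: "0 < v" "v < \<rho>"
    show "c a + v *\<^sub>R X1 a \<notin> Psi ` ?K"
    proof
      assume y: "c a + v *\<^sub>R X1 a \<in> Psi ` ?K"
      have "norm (c a + v *\<^sub>R X1 a - c a) < \<rho>" using v norm_ruling[OF aI] by simp
      then have close: "norm (G (c a + v *\<^sub>R X1 a) - (a, 0)) < min d1 d2" using \<rho>(2) y by blast
      define p where "p = G (c a + v *\<^sub>R X1 a)"
      have p: "p \<in> I \<times> UNIV" "Psi p = c a + v *\<^sub>R X1 a"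
        using G(1)[OF y] by (auto simp: p_def)
      have p_close: "norm (p - (a, 0)) < d1" "norm (p - (a, 0)) < d2"
        using close by (simp_all add: p_def)
      show False
      proof (cases "0 \<le> snd p")
        case True
        then show False using X2[OF p(1) p_close(2) v(1)] p(2) by (simp add: psi_eq)
      next
        case False
        then show False using X1[OF p(1) p_close(1) _ v(1)] p(2) by (simp add: psi_eq)
      qed
    qed
  qed
qed

lemma phi_not_subset_psi:
  assumes "tube_injective \<epsilon>" "0 < \<delta>" "\<delta> \<le> \<epsilon>"
  shows "\<not> Phi ` Omega I \<delta> \<subseteq> Psi ` Omega I \<epsilon>"
proof
  assume sub: "Phi ` Omega I \<delta> \<subseteq> Psi ` Omega I \<epsilon>"
  have "0 \<le> \<epsilon>" using assms(2,3) by simp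
  then obtain \<rho> where \<rho>: "\<rho> > 0"
    "\<And>v. 0 < v \<Longrightarrow> v < \<rho> \<Longrightarrow> c a + v *\<^sub>R X1 a \<notin> Psi ` (I \<times> {-\<epsilon>..\<epsilon>})"
    using psi_avoids_ray[OF assms(1)] by blast
  define v where "v = min \<delta> \<rho> / 2"
  have v: "0 < v" "v < \<delta>" "v < \<rho>" using assms(2) \<rho>(1) by (auto simp: v_def)
  have "(a, v) \<in> Omega I \<delta>" using Omega_memI[of a v \<delta>] a_less_b v by simp
  then have "Phi (a, v) \<in> Psi ` Omega I \<epsilon>" using sub by (auto intro: subsetD)
  moreover have "Psi ` Omega I \<epsilon> \<subseteq> Psi ` (I \<times> {-\<epsilon>..\<epsilon>})" by (intro image_mono Omega_subset)
  moreover have "Phi (a, v) = c a + v *\<^sub>R X1 a" using v(1) by (simp add: phi_eq)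
  ultimately have "c a + v *\<^sub>R X1 a \<in> Psi ` (I \<times> {-\<epsilon>..\<epsilon>})" by (metis subsetD)
  with \<rho>(2)[OF v(1,3)] show False ..
qed

theorem no_isometric_copy:
  assumes no_symmetry: "\<forall>T. isometry3 T \<and> T ` (c ` I) = c ` I \<longrightarrow> T = id"
  shows "\<exists>\<epsilon>0>0. \<forall>\<epsilon>. 0 < \<epsilon> \<and> \<epsilon> \<le> \<epsilon>0 \<longrightarrow> (\<forall>\<delta>. 0 < \<delta> \<and> \<delta> \<le> \<epsilon> \<longrightarrow>
      \<not> (\<exists>T. isometry3 T \<and> T ` (Phi ` Omega I \<delta>) \<subseteq> Psi ` Omega I \<epsilon>))"
proof -
  obtain \<epsilon>0 where \<epsilon>0: "\<epsilon>0 > 0" "tube_injective \<epsilon>0" "sheets_immersed \<epsilon>0"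
    by (rule small_tube)
  show ?thesis
  proof (intro exI[of _ \<epsilon>0] conjI allI impI notI)
    fix \<epsilon> \<delta> assume \<epsilon>: "0 < \<epsilon> \<and> \<epsilon> \<le> \<epsilon>0" and \<delta>: "0 < \<delta> \<and> \<delta> \<le> \<epsilon>"
      and "\<exists>T. isometry3 T \<and> T ` (Phi ` Omega I \<delta>) \<subseteq> Psi ` Omega I \<epsilon>"
    then obtain T where T: "isometry3 T" "T ` Phi ` Omega I \<delta> \<subseteq> Psi ` Omega I \<epsilon>" by blast
    have tube: "tube_injective \<epsilon>" "sheets_immersed \<epsilon>"
      using \<epsilon> \<epsilon>0 tube_injective_mono sheets_immersed_mono by blast+
    have "T ` c ` I \<subseteq> c ` I"
      using isometry_maps_curve_into_curve[OF tube _ _ T] \<delta> by blast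
    then have "T ` c ` I = c ` I"
      using compact_continuous_image[OF Cinf_on_continuous_on[OF Cinf_c] compact_Icc] T(1)
      by (intro isometric_compact_self_map_onto) (auto simp: isometry3_def)
    with no_symmetry T(1) have "T = id" by blast
    with phi_not_subset_psi[OF tube(1)] \<delta> T(2) show False by simp
  qed (rule \<epsilon>0(1))
qed

end

theorem corollary1p2:
  fixes c :: "real \<Rightarrow> real^3" and \<alpha> :: "real \<Rightarrow> real" and a b :: real
  assumes "a < b"
    and "smooth_on {a..b} c"
    and "\<forall>t\<in>{a..b}. norm (vd {a..b} c t) = 1"
    and "\<forall>t\<in>{a..b}. curv {a..b} c t > 0"
    and "inj_on c {a..b}"
    and "smooth_on {a..b} \<alpha>"
    and "\<forall>t\<in>{a..b}. 0 < \<bar>\<alpha> t\<bar> \<and> \<bar>\<alpha> t\<bar> < pi / 2"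
    and "\<forall>T. isometry3 T \<and> T ` (c ` {a..b}) = c ` {a..b} \<longrightarrow> T = id"
  shows "\<exists>\<epsilon>0>0. \<forall>\<epsilon>. 0 < \<epsilon> \<and> \<epsilon> \<le> \<epsilon>0 \<longrightarrow>
           (\<forall>\<delta>. 0 < \<delta> \<and> \<delta> \<le> \<epsilon> \<longrightarrow>
              \<not> (\<exists>T. isometry3 T \<and>
                   T ` (origami_phi {a..b} c \<alpha> ` Omega {a..b} \<delta>)
                     \<subseteq> origami_psi {a..b} c \<alpha> ` Omega {a..b} \<epsilon>))"
proof -
  interpret origami_curve a b c \<alpha>
    using assms(1-7) by (rule origami_curve.intro)
  show ?thesis using no_isometric_copy[OF assms(8)] .
qed

end
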